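(* Let $\mathbf{k}$ be a commutative ring, $n\ge0$, $\mathcal{A}=\mathbf{k}[S_n]$. Let $\mathbf{a}=\sum_{\alpha\in\operatorname{Comp}_n}\lambda_\alpha\mathbf{B}_\alpha$ with $\lambda_\alpha\in\mathbf{k}$. Then the $\mathbf{k}$-linear map $\mathcal{A}\to\mathcal{A},\ \mathbf{x}\mapsto\mathbf{a}\mathbf{x}$ is represented, with respect to the basis $\{\mathbf{B}_{\operatorname{LRM}'(w)}\,w\mid w\in S_n\}$ of $\mathcal{A}$ (suitably ordered), by a triangular matrix, whose diagonal entries (and thus the eigenvalues of this map, listed with algebraic multiplicities) are the numbers $\sum_{\alpha\in\operatorname{Comp}_n}\lambda_\alpha\,\eta_{\operatorname{cLRM}'(w)}(\alpha)$ as $w$ ranges over $S_n$.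
   Context: $S_n$ is the symmetric group on $[n]=\{1,\dots,n\}$, with product $(uw)(i)=u(w(i))$. $\operatorname{Des}(u)=\{i\in[n-1]:u(i)>u(i+1)\}$; for $I\subseteq[n-1]$, $\mathbf{B}_I=\sum_{u\in S_n,\ \operatorname{Des}(u)\subseteq I}u$. A composition $\alpha=(\alpha_1,\dots,\alpha_p)$ of $n$ is a finite sequence of positive integers with sum $n$, of length $\ell(\alpha)=p$; $\operatorname{Comp}_n$ is the set of these. $\operatorname{Set}(\alpha)=\{\alpha_1,\alpha_1+\alpha_2,\dots,\alpha_1+\cdots+\alpha_{p-1}\}$, $\mathbf{B}_\alpha:=\mathbf{B}_{\operatorname{Set}(\alpha)}$; $\operatorname{Comp}(I)$ is the inverse of $\operatorname{Set}$. $\operatorname{LRM}(w)=\{i\in[n]: w(k)>i \text{ for all } k<w^{-1}(i)\}$, $\operatorname{LRM}'(w)=\{\ell-1:\ell\in\operatorname{LRM}(w),\ \ell>1\}$, $\operatorname{cLRM}'(w)=\operatorname{Comp}(\operatorname{LRM}'(w))$. For $\alpha,\beta\in\operatorname{Comp}_n$, $\eta_\beta(\alpha)$ is the number of functions $f:[\ell(\beta)]\to[\ell(\alpha)]$ with $\alpha_j=\sum_{i\in f^{-1}(j)}\beta_i$ for every $j\in[\ell(\alpha)]$. *)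

theory Defs
  imports "HOL-Combinatorics.Permutations" "HOL-Library.FuncSet"
begin

text \<open>Elements of the group algebra k[S_n] are functions
 (nat => nat) => k vanishing outside S_n.  Product: (uw)(i) = u(w(i)), i.e. uw = u o w.\<close>

definition Sn :: "nat \<Rightarrow> (nat \<Rightarrow> nat) set" where
  "Sn n = {w. w permutes {1..n}}"

definition gmult :: "nat \<Rightarrow> ((nat \<Rightarrow> nat) \<Rightarrow> 'k::comm_ring_1) \<Rightarrow> ((nat \<Rightarrow> nat) \<Rightarrow> 'k) \<Rightarrow> ((nat \<Rightarrow> nat) \<Rightarrow> 'k)" where
  "gmult n x y = (\<lambda>v. \<Sum>p\<in>{(u, w). u \<in> Sn n \<and> w \<in> Sn n \<and> u \<circ> w = v}. x (fst p) * y (snd p))"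

definition delta :: "(nat \<Rightarrow> nat) \<Rightarrow> ((nat \<Rightarrow> nat) \<Rightarrow> 'k::comm_ring_1)" where
  "delta w = (\<lambda>u. if u = w then 1 else 0)"

definition Des :: "nat \<Rightarrow> (nat \<Rightarrow> nat) \<Rightarrow> nat set" where
  "Des n u = {i \<in> {1..n - 1}. u i > u (Suc i)}"

definition BI :: "nat \<Rightarrow> nat set \<Rightarrow> ((nat \<Rightarrow> nat) \<Rightarrow> 'k::comm_ring_1)" where
  "BI n I = (\<lambda>u. if u \<in> Sn n \<and> Des n u \<subseteq> I then 1 else 0)"

definition Comp :: "nat \<Rightarrow> nat list set" where
  "Comp n = {\<alpha>. (\<forall>x\<in>set \<alpha>. 0 < x) \<and> sum_list \<alpha> = n}"

definition SetC :: "nat list \<Rightarrow> nat set" where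
  "SetC \<alpha> = {sum_list (take i \<alpha>) | i. 1 \<le> i \<and> i < length \<alpha>}"

definition CompOf :: "nat \<Rightarrow> nat set \<Rightarrow> nat list" where
  "CompOf n I = (THE \<alpha>. \<alpha> \<in> Comp n \<and> SetC \<alpha> = I)"

definition B_comp :: "nat \<Rightarrow> nat list \<Rightarrow> ((nat \<Rightarrow> nat) \<Rightarrow> 'k::comm_ring_1)" where
  "B_comp n \<alpha> = BI n (SetC \<alpha>)"

definition LRM :: "nat \<Rightarrow> (nat \<Rightarrow> nat) \<Rightarrow> nat set" where
  "LRM n w = {i \<in> {1..n}. \<forall>k. 1 \<le> k \<and> k < inv w i \<longrightarrow> w k > i}"

definition LRM' :: "nat \<Rightarrow> (nat \<Rightarrow> nat) \<Rightarrow> nat set" where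
  "LRM' n w = {l - 1 | l. l \<in> LRM n w \<and> l > 1}"

definition cLRM' :: "nat \<Rightarrow> (nat \<Rightarrow> nat) \<Rightarrow> nat list" where
  "cLRM' n w = CompOf n (LRM' n w)"

text \<open>eta_beta(alpha), with 0-based indices.\<close>
definition eta :: "nat list \<Rightarrow> nat list \<Rightarrow> nat" where
  "eta \<beta> \<alpha> = card {f \<in> {0..<length \<beta>} \<rightarrow>\<^sub>E {0..<length \<alpha>}.
      \<forall>j < length \<alpha>. \<alpha> ! j = (\<Sum>i\<in>{i. i < length \<beta> \<and> f i = j}. \<beta> ! i)}"

definition lrm_basis :: "nat \<Rightarrow> (nat \<Rightarrow> nat) \<Rightarrow> ((nat \<Rightarrow> nat) \<Rightarrow> 'k::comm_ring_1)" where
  "lrm_basis n w = gmult n (BI n (LRM' n w)) (delta w)"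

end

theory Submission
  imports Defs "HOL-Library.Nat_Bijection" "HOL-Library.List_Lexorder"
begin

lemma Sn_permutes: "w \<in> Sn n \<Longrightarrow> w permutes {1..n}"
  by (simp add: Sn_def)

lemma finite_Sn: "finite (Sn n)"
  unfolding Sn_def by (rule finite_permutations) simp

lemma inj_Sn: "w \<in> Sn n \<Longrightarrow> inj w"
  by (rule permutes_inj[OF Sn_permutes])

lemma Sn_in_range: "w \<in> Sn n \<Longrightarrow> i \<in> {1..n} \<Longrightarrow> w i \<in> {1..n}"
  by (rule permutes_in_image[OF Sn_permutes, THEN iffD2])

lemma Sn_fixpoint: "w \<in> Sn n \<Longrightarrow> i \<notin> {1..n} \<Longrightarrow> w i = i"
  by (rule permutes_not_in[OF Sn_permutes])

lemma Sn_image: "w \<in> Sn n \<Longrightarrow> w ` {1..n} = {1..n}"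
  by (rule permutes_image[OF Sn_permutes])

lemma comp_in_Sn: "u \<in> Sn n \<Longrightarrow> w \<in> Sn n \<Longrightarrow> u \<circ> w \<in> Sn n"
  unfolding Sn_def by (simp add: permutes_compose)

lemma inv_in_Sn: "w \<in> Sn n \<Longrightarrow> inv w \<in> Sn n"
  unfolding Sn_def by (simp add: permutes_inv)

lemma Sn_inv_comp: "w \<in> Sn n \<Longrightarrow> inv w \<circ> w = id" "w \<in> Sn n \<Longrightarrow> w \<circ> inv w = id"
  by (rule permutes_inv_o(2)[OF Sn_permutes], assumption)
    (rule permutes_inv_o(1)[OF Sn_permutes], assumption)

lemma Sn_inv_apply: "w \<in> Sn n \<Longrightarrow> inv w (w i) = i" "w \<in> Sn n \<Longrightarrow> w (inv w i) = i"
  by (rule permutes_inverses(2)[OF Sn_permutes], assumption)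
    (rule permutes_inverses(1)[OF Sn_permutes], assumption)

lemma Sn_eqI:
  assumes "x \<in> Sn n" "w \<in> Sn n" "\<And>i. i \<in> {1..n} \<Longrightarrow> x i = w i"
  shows "x = w"
proof
  fix i show "x i = w i"
    using assms Sn_fixpoint[of x n i] Sn_fixpoint[of w n i] by (cases "i \<in> {1..n}") auto
qed

lemma in_SnI:
  assumes "inj_on u {1..n}" "u ` {1..n} \<subseteq> {1..n}" "\<And>i. i \<notin> {1..n} \<Longrightarrow> u i = i"
  shows "u \<in> Sn n"
proof -
  have "u ` {1..n} = {1..n}" by (rule endo_inj_surj) (use assms in auto)
  thus ?thesis
    unfolding Sn_def using assms by (auto intro!: bij_imp_permutes simp: bij_betw_def)
qed

lemma image_Sn_Collect:
  assumes "y \<in> Sn n"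
  shows "y ` {i\<in>{1..n}. P (y i)} = {a\<in>{1..n}. P a}"
proof (intro equalityI subsetI)
  fix a assume "a \<in> {a\<in>{1..n}. P a}"
  thus "a \<in> y ` {i\<in>{1..n}. P (y i)}"
    using Sn_inv_apply(2)[OF assms] Sn_in_range[OF inv_in_Sn[OF assms]] by (metis (mono_tags) image_eqI mem_Collect_eq)
qed (use Sn_in_range[OF assms] in auto)

lemma card_Sn_preimage:
  assumes "y \<in> Sn n"
  shows "card {i\<in>{1..n}. P (y i)} = card {a\<in>{1..n}. P a}"
proof -
  have "inj_on y {i\<in>{1..n}. P (y i)}"
    using inj_Sn[OF assms] by (simp add: inj_on_def inj_def)
  from card_image[OF this] show ?thesis unfolding image_Sn_Collect[OF assms] by simp
qed

lemma card_less_rank_less: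
  fixes x :: "'a \<Rightarrow> 'b::linorder"
  assumes "finite A" "i \<in> A"
  shows "card {k\<in>A. x k < x i} < card A"
proof (rule psubset_card_mono[OF assms(1)])
  show "{k\<in>A. x k < x i} \<subset> A" using assms(2) by auto
qed

lemma card_less_rank_less_iff:
  fixes x :: "'a \<Rightarrow> 'b::linorder"
  assumes "finite A" "inj_on x A" "i \<in> A" "j \<in> A"
  shows "card {k\<in>A. x k < x i} < card {k\<in>A. x k < x j} \<longleftrightarrow> x i < x j"
proof
  assume "x i < x j"
  hence "{k\<in>A. x k < x i} \<subset> {k\<in>A. x k < x j}" using assms(3) by auto
  thus "card {k\<in>A. x k < x i} < card {k\<in>A. x k < x j}"
    by (rule psubset_card_mono[rotated]) (simp add: assms(1))
next
  assume lt: "card {k\<in>A. x k < x i} < card {k\<in>A. x k < x j}"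
  show "x i < x j"
  proof (rule ccontr)
    assume "\<not> x i < x j"
    hence "{k\<in>A. x k < x j} \<subseteq> {k\<in>A. x k < x i}" by auto
    hence "card {k\<in>A. x k < x j} \<le> card {k\<in>A. x k < x i}"
      by (rule card_mono[rotated]) (simp add: assms(1))
    thus False using lt by simp
  qed
qed

lemma sum_indicator_eq_card:
  "finite A \<Longrightarrow> (\<Sum>x\<in>A. if P x then (1::'k::comm_ring_1) else 0) = of_nat (card {x\<in>A. P x})"
  by (simp add: sum.inter_filter[symmetric])

lemma gmult_apply:
  fixes X Y :: "(nat \<Rightarrow> nat) \<Rightarrow> 'k::comm_ring_1"
  shows "gmult n X Y x = (if x \<in> Sn n then (\<Sum>y\<in>Sn n. X (x \<circ> inv y) * Y y) else 0)"
proof (cases "x \<in> Sn n")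
  case True
  have pairs: "{(u, w). u \<in> Sn n \<and> w \<in> Sn n \<and> u \<circ> w = x} = (\<lambda>y. (x \<circ> inv y, y)) ` Sn n"
  proof (rule set_eqI, rule iffI)
    fix p assume "p \<in> {(u, w). u \<in> Sn n \<and> w \<in> Sn n \<and> u \<circ> w = x}"
    then obtain u w where p: "p = (u, w)" "u \<in> Sn n" "w \<in> Sn n" "u \<circ> w = x" by auto
    have "x \<circ> inv w = u" using p Sn_inv_comp[of w n] by (metis comp_assoc comp_id)
    thus "p \<in> (\<lambda>y. (x \<circ> inv y, y)) ` Sn n" using p by auto
  next
    fix p assume "p \<in> (\<lambda>y. (x \<circ> inv y, y)) ` Sn n"
    then obtain y where "y \<in> Sn n" "p = (x \<circ> inv y, y)" by auto
    thus "p \<in> {(u, w). u \<in> Sn n \<and> w \<in> Sn n \<and> u \<circ> w = x}"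
      using True comp_in_Sn inv_in_Sn Sn_inv_comp[of y n] by (auto simp: comp_assoc)
  qed
  have inj: "inj_on (\<lambda>y. (x \<circ> inv y, y)) (Sn n)" by (auto simp: inj_on_def)
  show ?thesis using True unfolding gmult_def pairs by (simp add: sum.reindex[OF inj])
next
  case False
  have "{(u, w). u \<in> Sn n \<and> w \<in> Sn n \<and> u \<circ> w = x} = {}" using False comp_in_Sn by auto
  thus ?thesis using False unfolding gmult_def by (simp only: sum.empty if_False)
qed

lemma gmult_sum_left:
  "gmult n (\<lambda>u. \<Sum>\<alpha>\<in>A. c \<alpha> * X \<alpha> u) Y = (\<lambda>x. \<Sum>\<alpha>\<in>A. c \<alpha> * gmult n (X \<alpha>) Y x)"
proof
  fix x
  have "(\<Sum>y\<in>Sn n. (\<Sum>\<alpha>\<in>A. c \<alpha> * X \<alpha> (x \<circ> inv y)) * Y y)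
      = (\<Sum>\<alpha>\<in>A. c \<alpha> * (\<Sum>y\<in>Sn n. X \<alpha> (x \<circ> inv y) * Y y))"
    by (simp add: sum_distrib_left sum_distrib_right mult.assoc sum.swap[of _ "Sn n"])
  thus "gmult n (\<lambda>u. \<Sum>\<alpha>\<in>A. c \<alpha> * X \<alpha> u) Y x = (\<Sum>\<alpha>\<in>A. c \<alpha> * gmult n (X \<alpha>) Y x)"
    by (simp add: gmult_apply)
qed

lemma sum_delta_mult:
  fixes b :: "'a \<Rightarrow> 'k::comm_ring_1"
  assumes "finite S" "w \<in> S"
  shows "(\<Sum>u\<in>S. (if u = w then e else 0) * b u) = e * b w"
proof -
  have "(\<Sum>u\<in>S. (if u = w then e else 0) * b u) = (\<Sum>u\<in>S. if u = w then e * b u else 0)"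
    by (rule sum.cong) auto
  thus ?thesis using assms by simp
qed

lemma sum_mult_delta:
  "w \<in> Sn n \<Longrightarrow> (\<Sum>y\<in>Sn n. f y * delta w y) = f w"
  using sum_delta_mult[OF finite_Sn, of w n 1 f] by (simp add: delta_def mult.commute)

definition block_index :: "nat set \<Rightarrow> nat \<Rightarrow> nat" where
  "block_index I a = card {t\<in>I. t < a}"

lemma block_index_mono: "finite I \<Longrightarrow> a \<le> b \<Longrightarrow> block_index I a \<le> block_index I b"
  unfolding block_index_def by (rule card_mono) auto

lemma block_index_less_imp_less: "finite I \<Longrightarrow> block_index I a < block_index I b \<Longrightarrow> a < b"
  using block_index_mono[of I b a] by (cases "a < b") auto

lemma block_index_eq_iff:
  assumes "finite I" "a \<le> b"
  shows "block_index I a = block_index I b \<longleftrightarrow> \<not> (\<exists>t\<in>I. a \<le> t \<and> t < b)"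
proof -
  have sub: "{t\<in>I. t < a} \<subseteq> {t\<in>I. t < b}" using assms by auto
  have fin: "finite {t\<in>I. t < b}" using assms by auto
  have 1: "block_index I a = block_index I b \<longleftrightarrow> {t\<in>I. t < a} = {t\<in>I. t < b}"
  proof
    assume "block_index I a = block_index I b"
    thus "{t\<in>I. t < a} = {t\<in>I. t < b}" using card_subset_eq[OF fin sub] unfolding block_index_def by simp
  next
    assume "{t\<in>I. t < a} = {t\<in>I. t < b}" thus "block_index I a = block_index I b" unfolding block_index_def by simp
  qed
  have 2: "{t\<in>I. t < a} = {t\<in>I. t < b} \<longleftrightarrow> \<not> (\<exists>t\<in>I. a \<le> t \<and> t < b)"
  proof
    assume e: "{t\<in>I. t < a} = {t\<in>I. t < b}"
    show "\<not> (\<exists>t\<in>I. a \<le> t \<and> t < b)"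
    proof
      assume "\<exists>t\<in>I. a \<le> t \<and> t < b"
      then obtain t where t: "t \<in> I" "a \<le> t" "t < b" by blast
      hence "t \<in> {t\<in>I. t < b}" by simp
      hence "t \<in> {t\<in>I. t < a}" using e by simp
      thus False using t by simp
    qed
  next
    assume h: "\<not> (\<exists>t\<in>I. a \<le> t \<and> t < b)"
    show "{t\<in>I. t < a} = {t\<in>I. t < b}"
    proof (rule equalityI[OF sub], rule subsetI)
      fix t assume "t \<in> {t\<in>I. t < b}"
      hence "t \<in> I" "t < b" by auto
      hence "t < a" using h by (meson not_le)
      thus "t \<in> {t\<in>I. t < a}" using \<open>t \<in> I\<close> by simp
    qed
  qed
  show ?thesis using 1 2 by simp
qed

lemma Des_subset_iff:
  assumes u: "u \<in> Sn n" and I: "finite I"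
  shows "Des n u \<subseteq> I \<longleftrightarrow>
    (\<forall>a\<in>{1..n}. \<forall>b\<in>{1..n}. a < b \<and> block_index I a = block_index I b \<longrightarrow> u a < u b)"
proof
  assume D: "Des n u \<subseteq> I"
  show "\<forall>a\<in>{1..n}. \<forall>b\<in>{1..n}. a < b \<and> block_index I a = block_index I b \<longrightarrow> u a < u b"
  proof (intro ballI impI)
    fix a b assume a: "a \<in> {1..n}" and b: "b \<in> {1..n}"
      and ab: "a < b \<and> block_index I a = block_index I b"
    hence no_cut: "\<not> (\<exists>t\<in>I. a \<le> t \<and> t < b)" using block_index_eq_iff[OF I, of a b] by auto
    have "u a < u c" if "a < c" "c \<le> b" for c
      using that
    proof (induction c rule: less_induct)
      case (less c)
      define d where "d = c - 1"
      have c: "c = Suc d" using less.prems d_def by auto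
      have "d \<notin> Des n u" using D no_cut less.prems c by (metis Suc_le_lessD less_Suc_eq_le subsetD)
      moreover have "d \<in> {1..n-1}" using less.prems c a b by auto
      ultimately have "u d \<le> u c" using c unfolding Des_def by auto
      moreover have "u d \<noteq> u c" using inj_Sn[OF u] c by (metis injD n_not_Suc_n)
      ultimately have "u d < u c" by simp
      thus ?case using less.IH[of d] less.prems c by (cases "a = d") auto
    qed
    thus "u a < u b" using ab by simp
  qed
next
  assume H: "\<forall>a\<in>{1..n}. \<forall>b\<in>{1..n}. a < b \<and> block_index I a = block_index I b \<longrightarrow> u a < u b"
  show "Des n u \<subseteq> I"
  proof
    fix i assume "i \<in> Des n u"
    hence i: "i \<in> {1..n-1}" and desc: "u (Suc i) < u i" by (auto simp: Des_def)
    show "i \<in> I"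
    proof (rule ccontr)
      assume "i \<notin> I"
      hence "block_index I i = block_index I (Suc i)"
        using block_index_eq_iff[OF I, of i "Suc i"] by (auto simp: less_Suc_eq_le)
      thus False using H i desc by fastforce
    qed
  qed
qed

definition block_equiv :: "nat \<Rightarrow> (nat \<Rightarrow> nat) \<Rightarrow> (nat \<Rightarrow> nat) \<Rightarrow> (nat \<Rightarrow> nat) \<Rightarrow> bool" where
  "block_equiv n g v x \<longleftrightarrow> (\<forall>i\<in>{1..n}. \<forall>j\<in>{1..n}. g i = g j \<longrightarrow> (v i < v j \<longleftrightarrow> x i < x j))"

definition block_class :: "nat \<Rightarrow> (nat \<Rightarrow> nat) \<Rightarrow> (nat \<Rightarrow> nat) \<Rightarrow> (nat \<Rightarrow> nat) \<Rightarrow> 'k::comm_ring_1" where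
  "block_class n g v = (\<lambda>x. if x \<in> Sn n \<and> block_equiv n g v x then 1 else 0)"

lemma block_equiv_refl: "block_equiv n g v v"
  by (auto simp: block_equiv_def)

lemma block_equiv_sym: "block_equiv n g v x \<Longrightarrow> block_equiv n g x v"
  unfolding block_equiv_def by blast

lemma block_equiv_trans: "block_equiv n g v x \<Longrightarrow> block_equiv n g x y \<Longrightarrow> block_equiv n g v y"
  unfolding block_equiv_def by blast

lemma block_equiv_commute: "block_equiv n g v x \<Longrightarrow> block_equiv n g v y \<longleftrightarrow> block_equiv n g x y"
  using block_equiv_sym block_equiv_trans by blast

lemma block_equivI:
  assumes "v \<in> Sn n" "x \<in> Sn n"
    and "\<And>i j. i\<in>{1..n} \<Longrightarrow> j\<in>{1..n} \<Longrightarrow> g i = g j \<Longrightarrow> v i < v j \<Longrightarrow> x i < x j"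
  shows "block_equiv n g v x"
  unfolding block_equiv_def
proof (intro ballI impI iffI)
  fix i j assume ij: "i\<in>{1..n}" "j\<in>{1..n}" "g i = g j"
  show "x i < x j" if "v i < v j" using assms(3) ij that by blast
  show "v i < v j" if "x i < x j"
  proof -
    have "v i \<noteq> v j" using that inj_Sn[OF assms(1)] by (metis injD less_irrefl)
    moreover have "\<not> v j < v i" using assms(3)[of j i] ij that by auto
    ultimately show ?thesis by simp
  qed
qed

lemma block_equiv_refine:
  assumes "\<And>i j. i\<in>{1..n} \<Longrightarrow> j\<in>{1..n} \<Longrightarrow> g' i = g' j \<Longrightarrow> g i = g j"
  shows "block_equiv n g v x \<Longrightarrow> block_equiv n g' v x"
  using assms unfolding block_equiv_def by blast

lemma block_equiv_cong:
  assumes "\<And>i j. i\<in>{1..n} \<Longrightarrow> j\<in>{1..n} \<Longrightarrow> g i = g j \<longleftrightarrow> g' i = g' j"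
  shows "block_equiv n g v x = block_equiv n g' v x"
  using assms unfolding block_equiv_def by metis

lemma block_class_cong:
  assumes "\<And>i j. i\<in>{1..n} \<Longrightarrow> j\<in>{1..n} \<Longrightarrow> g i = g j \<longleftrightarrow> g' i = g' j"
  shows "block_class n g v = block_class n g' v"
  unfolding block_class_def using block_equiv_cong[OF assms] by simp

lemma block_class_eq:
  assumes "block_equiv n g v u"
  shows "block_class n g u = block_class n g v"
proof
  fix x show "block_class n g u x = block_class n g v x"
    using block_equiv_commute[OF assms, of x] by (simp add: block_class_def)
qed

lemma Des_comp_inv_subset_iff:
  assumes x: "x \<in> Sn n" and y: "y \<in> Sn n" and I: "finite I"
  shows "Des n (x \<circ> inv y) \<subseteq> I \<longleftrightarrow> block_equiv n (\<lambda>i. block_index I (y i)) y x"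
proof -
  have u: "x \<circ> inv y \<in> Sn n" using x y comp_in_Sn inv_in_Sn by blast
  have "Des n (x \<circ> inv y) \<subseteq> I \<longleftrightarrow>
     (\<forall>i\<in>{1..n}. \<forall>j\<in>{1..n}. y i < y j \<and> block_index I (y i) = block_index I (y j) \<longrightarrow> x i < x j)"
    (is "_ \<longleftrightarrow> ?R")
  proof -
    have "Des n (x \<circ> inv y) \<subseteq> I \<longleftrightarrow> (\<forall>a\<in>{1..n}. \<forall>b\<in>{1..n}. a < b \<and> block_index I a = block_index I b \<longrightarrow> (x \<circ> inv y) a < (x \<circ> inv y) b)"
      by (rule Des_subset_iff[OF u I])
    also have "\<dots> \<longleftrightarrow> ?R"
    proof
      assume L: "\<forall>a\<in>{1..n}. \<forall>b\<in>{1..n}. a < b \<and> block_index I a = block_index I b \<longrightarrow> (x \<circ> inv y) a < (x \<circ> inv y) b"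
      show ?R
      proof (intro ballI impI)
        fix i j assume "i\<in>{1..n}" "j\<in>{1..n}" "y i < y j \<and> block_index I (y i) = block_index I (y j)"
        thus "x i < x j" using L[rule_format, of "y i" "y j"] Sn_in_range[OF y] Sn_inv_apply[OF y] by auto
      qed
    next
      assume R: ?R
      show "\<forall>a\<in>{1..n}. \<forall>b\<in>{1..n}. a < b \<and> block_index I a = block_index I b \<longrightarrow> (x \<circ> inv y) a < (x \<circ> inv y) b"
      proof (intro ballI impI)
        fix a b assume a: "a\<in>{1..n}" and b: "b\<in>{1..n}" and ab: "a < b \<and> block_index I a = block_index I b"
        have "inv y a \<in> {1..n}" "inv y b \<in> {1..n}" using a b Sn_in_range[OF inv_in_Sn[OF y]] by auto
        thus "(x \<circ> inv y) a < (x \<circ> inv y) b" using R ab Sn_inv_apply[OF y] by fastforce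
      qed
    qed
    finally show ?thesis .
  qed
  also have "?R \<longleftrightarrow> block_equiv n (\<lambda>i. block_index I (y i)) y x"
  proof
    assume ?R thus "block_equiv n (\<lambda>i. block_index I (y i)) y x" using block_equivI[OF y x] by auto
  next
    assume "block_equiv n (\<lambda>i. block_index I (y i)) y x" thus ?R unfolding block_equiv_def by auto
  qed
  finally show ?thesis .
qed

lemma gmult_BI_apply:
  assumes "x \<in> Sn n" "y \<in> Sn n" "finite I"
  shows "BI n I (x \<circ> inv y) = (if block_equiv n (\<lambda>i. block_index I (y i)) y x then 1 else 0)"
  using assms Des_comp_inv_subset_iff[OF assms] comp_in_Sn inv_in_Sn by (simp add: BI_def)

lemma BI_mult_delta:
  assumes "w \<in> Sn n" "finite I"
  shows "gmult n (BI n I) (delta w) = block_class n (\<lambda>i. block_index I (w i)) w"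
proof
  fix x
  show "gmult n (BI n I) (delta w) x = block_class n (\<lambda>i. block_index I (w i)) w x"
    using assms by (simp add: gmult_apply sum_mult_delta gmult_BI_apply block_class_def)
qed

definition psum :: "nat list \<Rightarrow> nat \<Rightarrow> nat" where
  "psum \<alpha> i = sum_list (take i \<alpha>)"

lemma Comp_nth_pos: "\<alpha> \<in> Comp n \<Longrightarrow> i < length \<alpha> \<Longrightarrow> 0 < \<alpha> ! i"
  unfolding Comp_def using nth_mem by blast

lemma psum_0 [simp]: "psum \<alpha> 0 = 0"
  by (simp add: psum_def)

lemma psum_Suc: "i < length \<alpha> \<Longrightarrow> psum \<alpha> (Suc i) = psum \<alpha> i + \<alpha> ! i"
  unfolding psum_def by (simp add: take_Suc_conv_app_nth)

lemma psum_length: "\<alpha> \<in> Comp n \<Longrightarrow> psum \<alpha> (length \<alpha>) = n"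
  unfolding psum_def Comp_def by simp

lemma psum_strict_mono:
  assumes "\<alpha> \<in> Comp n" "i < j" "j \<le> length \<alpha>"
  shows "psum \<alpha> i < psum \<alpha> j"
  using assms(2,3)
proof (induction j)
  case (Suc j)
  thus ?case using psum_Suc[of j \<alpha>] Comp_nth_pos[OF assms(1), of j] by (cases "i = j") auto
qed simp

lemma psum_mono: "\<alpha> \<in> Comp n \<Longrightarrow> i \<le> j \<Longrightarrow> j \<le> length \<alpha> \<Longrightarrow> psum \<alpha> i \<le> psum \<alpha> j"
  using psum_strict_mono[of \<alpha> n i j] by (cases "i = j") auto

lemma psum_le: "\<alpha> \<in> Comp n \<Longrightarrow> j \<le> length \<alpha> \<Longrightarrow> psum \<alpha> j \<le> n"
  using psum_mono[of \<alpha> n j "length \<alpha>"] psum_length by simp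

lemma inj_on_psum: "\<alpha> \<in> Comp n \<Longrightarrow> inj_on (psum \<alpha>) {0..length \<alpha>}"
  by (rule inj_onI) (metis atLeastAtMost_iff linorder_neqE_nat psum_strict_mono less_irrefl)

lemma SetC_eq_image_psum: "SetC \<alpha> = psum \<alpha> ` {1..<length \<alpha>}"
  unfolding SetC_def psum_def by auto

lemma finite_SetC: "finite (SetC \<alpha>)"
  unfolding SetC_eq_image_psum by simp

lemma card_SetC: "\<alpha> \<in> Comp n \<Longrightarrow> card (SetC \<alpha>) = length \<alpha> - 1"
  unfolding SetC_eq_image_psum
  by (subst card_image) (auto intro: inj_on_subset[OF inj_on_psum])

lemma SetC_subset: "\<alpha> \<in> Comp n \<Longrightarrow> SetC \<alpha> \<subseteq> {1..n-1}"
proof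
  fix t assume a: "\<alpha> \<in> Comp n" and "t \<in> SetC \<alpha>"
  then obtain i where i: "1 \<le> i" "i < length \<alpha>" "t = psum \<alpha> i" unfolding SetC_eq_image_psum by auto
  have "psum \<alpha> 0 < psum \<alpha> i" using psum_strict_mono[OF a, of 0 i] i by simp
  moreover have "psum \<alpha> i < psum \<alpha> (length \<alpha>)" using psum_strict_mono[OF a, of i "length \<alpha>"] i by simp
  ultimately show "t \<in> {1..n-1}" using i psum_length[OF a] by simp
qed

lemma block_index_SetC:
  assumes a: "\<alpha> \<in> Comp n" and j: "j < length \<alpha>" and x: "psum \<alpha> j < x" "x \<le> psum \<alpha> (Suc j)"
  shows "block_index (SetC \<alpha>) x = j"
proof -
  have "{i\<in>{1..<length \<alpha>}. psum \<alpha> i < x} = {1..j}"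
  proof (intro equalityI subsetI)
    fix i assume i: "i \<in> {i\<in>{1..<length \<alpha>}. psum \<alpha> i < x}"
    hence "\<not> Suc j \<le> i" using psum_mono[OF a, of "Suc j" i] x by auto
    thus "i \<in> {1..j}" using i by simp
  next
    fix i assume "i \<in> {1..j}"
    thus "i \<in> {i\<in>{1..<length \<alpha>}. psum \<alpha> i < x}" using psum_mono[OF a, of i j] j x by simp
  qed
  hence "{t \<in> SetC \<alpha>. t < x} = psum \<alpha> ` {1..j}"
    unfolding SetC_eq_image_psum by blast
  moreover have "inj_on (psum \<alpha>) {1..j}" using j by (intro inj_on_subset[OF inj_on_psum[OF a]]) auto
  ultimately show ?thesis unfolding block_index_def by (simp add: card_image)
qed

lemma psum_interval_exists:
  assumes a: "\<alpha> \<in> Comp n" and x: "x \<in> {1..n}"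
  obtains j where "j < length \<alpha>" "psum \<alpha> j < x" "x \<le> psum \<alpha> (Suc j)"
proof -
  define j where "j = Max {j. j \<le> length \<alpha> \<and> psum \<alpha> j < x}"
  have fin: "finite {j. j \<le> length \<alpha> \<and> psum \<alpha> j < x}" by simp
  have "0 \<in> {j. j \<le> length \<alpha> \<and> psum \<alpha> j < x}" using x by simp
  hence jS: "j \<le> length \<alpha>" "psum \<alpha> j < x" using Max_in[OF fin] unfolding j_def by blast+
  have jl: "j < length \<alpha>" using jS psum_length[OF a] x by (metis atLeastAtMost_iff le_neq_implies_less not_le)
  have "\<not> psum \<alpha> (Suc j) < x" using Max_ge[OF fin, of "Suc j"] jl unfolding j_def by fastforce
  thus ?thesis using that jl jS by simp
qed

lemma block_index_SetC_less_length:
  "\<alpha> \<in> Comp n \<Longrightarrow> x \<in> {1..n} \<Longrightarrow> block_index (SetC \<alpha>) x < length \<alpha>"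
  by (metis psum_interval_exists block_index_SetC)

lemma block_index_SetC_fibre:
  assumes a: "\<alpha> \<in> Comp n" and j: "j < length \<alpha>"
  shows "{x\<in>{1..n}. block_index (SetC \<alpha>) x = j} = {psum \<alpha> j + 1 .. psum \<alpha> (Suc j)}"
proof (intro equalityI subsetI)
  fix x assume "x \<in> {x\<in>{1..n}. block_index (SetC \<alpha>) x = j}"
  then obtain j' where "j' < length \<alpha>" "psum \<alpha> j' < x" "x \<le> psum \<alpha> (Suc j')" "block_index (SetC \<alpha>) x = j"
    using psum_interval_exists[OF a] by blast
  thus "x \<in> {psum \<alpha> j + 1 .. psum \<alpha> (Suc j)}" using block_index_SetC[OF a] by fastforce
next
  fix x assume "x \<in> {psum \<alpha> j + 1 .. psum \<alpha> (Suc j)}"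
  thus "x \<in> {x\<in>{1..n}. block_index (SetC \<alpha>) x = j}"
    using block_index_SetC[OF a j] psum_le[OF a, of "Suc j"] j by auto
qed

lemma card_block_index_SetC_fibre:
  assumes "\<alpha> \<in> Comp n"
  shows "card {x\<in>{1..n}. block_index (SetC \<alpha>) x = j} = (if j < length \<alpha> then \<alpha> ! j else 0)"
proof (cases "j < length \<alpha>")
  case True thus ?thesis using block_index_SetC_fibre[OF assms True] psum_Suc[OF True] by simp
next
  case False
  hence "{x\<in>{1..n}. block_index (SetC \<alpha>) x = j} = {}"
    using block_index_SetC_less_length[OF assms] by fastforce
  thus ?thesis using False by simp
qed

lemma block_index_SetC_image:
  assumes a: "\<alpha> \<in> Comp n"
  shows "block_index (SetC \<alpha>) ` {1..n} = {0..<length \<alpha>}"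
proof (intro equalityI subsetI)
  fix j assume "j \<in> {0..<length \<alpha>}"
  hence j: "j < length \<alpha>" by simp
  hence "psum \<alpha> (Suc j) \<in> {x\<in>{1..n}. block_index (SetC \<alpha>) x = j}"
    unfolding block_index_SetC_fibre[OF a j] using psum_Suc[OF j] Comp_nth_pos[OF a j] by simp
  thus "j \<in> block_index (SetC \<alpha>) ` {1..n}" by (metis (mono_tags, lifting) image_eqI mem_Collect_eq)
qed (use block_index_SetC_less_length[OF a] in auto)

lemma Comp_SetC_inj:
  assumes a: "\<alpha> \<in> Comp n" and b: "\<beta> \<in> Comp n" and e: "SetC \<alpha> = SetC \<beta>"
  shows "\<alpha> = \<beta>"
proof (rule nth_equalityI)
  show l: "length \<alpha> = length \<beta>"
    using block_index_SetC_image[OF a] block_index_SetC_image[OF b] e by (metis card_atLeastLessThan diff_zero)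
  show "\<alpha> ! i = \<beta> ! i" if "i < length \<alpha>" for i
    using card_block_index_SetC_fibre[OF a, of i] card_block_index_SetC_fibre[OF b, of i] e l that by simp
qed

lemma SetC_snoc:
  assumes "\<alpha> \<noteq> []"
  shows "SetC (\<alpha> @ [c]) = SetC \<alpha> \<union> {sum_list \<alpha>}"
proof -
  have "SetC (\<alpha> @ [c]) = (\<lambda>i. sum_list (take i (\<alpha> @ [c]))) ` {1..<length \<alpha> + 1}"
    unfolding SetC_eq_image_psum psum_def by simp
  also have "\<dots> = (\<lambda>i. sum_list (take i \<alpha>)) ` {1..length \<alpha>}"
    by (rule image_cong) (auto simp: take_append)
  also have "{1..length \<alpha>} = {1..<length \<alpha>} \<union> {length \<alpha>}" using assms by (cases \<alpha>) auto
  also have "(\<lambda>i. sum_list (take i \<alpha>)) ` ({1..<length \<alpha>} \<union> {length \<alpha>}) = SetC \<alpha> \<union> {sum_list \<alpha>}"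
    unfolding SetC_def by auto
  finally show ?thesis .
qed

lemma Comp_SetC_surj: "I \<subseteq> {1..n-1} \<Longrightarrow> \<exists>\<alpha>\<in>Comp n. SetC \<alpha> = I"
proof (induction "card I" arbitrary: I n rule: less_induct)
  case less
  show ?case
  proof (cases "I = {}")
    case True
    have "(if n = 0 then [] else [n]) \<in> Comp n \<and> SetC (if n = 0 then [] else [n]) = {}"
      by (simp add: Comp_def SetC_def)
    thus ?thesis using True by blast
  next
    case False
    have finI: "finite I" using less.prems finite_subset by blast
    define m where "m = Max I"
    have mI: "m \<in> I" using False finI m_def Max_in by blast
    hence "m \<in> {1..n-1}" using less.prems by blast
    hence m: "1 \<le> m" "m < n" by auto
    have "I - {m} \<subseteq> {1..m-1}"
      using Max_ge[OF finI] less.prems unfolding m_def by fastforce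
    moreover have "card (I - {m}) < card I" using mI finI by (meson card_Diff1_less)
    ultimately obtain \<alpha> where \<alpha>: "\<alpha> \<in> Comp m" "SetC \<alpha> = I - {m}" using less.hyps by blast
    have "\<alpha> \<noteq> []" using \<alpha>(1) m by (auto simp: Comp_def)
    hence "SetC (\<alpha> @ [n - m]) = I" using SetC_snoc \<alpha> mI by (auto simp: Comp_def)
    moreover have "\<alpha> @ [n - m] \<in> Comp n" using \<alpha>(1) m by (auto simp: Comp_def)
    ultimately show ?thesis by blast
  qed
qed

lemma CompOf:
  assumes "I \<subseteq> {1..n-1}"
  shows "CompOf n I \<in> Comp n" "SetC (CompOf n I) = I"
proof -
  have "\<exists>!\<alpha>. \<alpha> \<in> Comp n \<and> SetC \<alpha> = I"
    using Comp_SetC_surj[OF assms] Comp_SetC_inj by blast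
  from theI'[OF this] show "CompOf n I \<in> Comp n" "SetC (CompOf n I) = I"
    unfolding CompOf_def by auto
qed

definition refine_labels :: "(nat \<Rightarrow> nat) \<Rightarrow> (nat \<Rightarrow> nat) \<Rightarrow> nat \<Rightarrow> nat" where
  "refine_labels g z i = prod_encode (g i, z i)"

lemma refine_labels_eq_iff: "refine_labels g z i = refine_labels g z j \<longleftrightarrow> g i = g j \<and> z i = z j"
  by (simp add: refine_labels_def prod_encode_eq)

text \<open>Positions with equal label \<open>z\<close> are sent to the \<open>z\<close>-th block of \<open>\<alpha>\<close>, in the order given by \<open>x\<close>.\<close>

definition fill_blocks :: "nat \<Rightarrow> nat list \<Rightarrow> (nat \<Rightarrow> nat) \<Rightarrow> (nat \<Rightarrow> nat) \<Rightarrow> nat \<Rightarrow> nat" where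
  "fill_blocks n \<alpha> z x i =
    (if i \<in> {1..n} then psum \<alpha> (z i) + 1 + card {k\<in>{1..n}. z k = z i \<and> x k < x i} else i)"

lemma fill_blocks_restrict: "fill_blocks n \<alpha> (restrict z {1..n}) x = fill_blocks n \<alpha> z x"
proof
  fix i show "fill_blocks n \<alpha> (restrict z {1..n}) x i = fill_blocks n \<alpha> z x i"
    unfolding fill_blocks_def by (cases "i \<in> {1..n}") (simp_all add: conj_commute cong: conj_cong)
qed

locale block_filling =
  fixes n :: nat and \<alpha> :: "nat list" and z x :: "nat \<Rightarrow> nat"
  assumes comp: "\<alpha> \<in> Comp n" and perm: "x \<in> Sn n"
    and fibres: "\<And>j. card {i\<in>{1..n}. z i = j} = card {b\<in>{1..n}. block_index (SetC \<alpha>) b = j}"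
begin

abbreviation filled where "filled \<equiv> fill_blocks n \<alpha> z x"

lemma label_less_length:
  assumes "i \<in> {1..n}"
  shows "z i < length \<alpha>"
proof (rule ccontr)
  assume "\<not> z i < length \<alpha>"
  hence "card {i'\<in>{1..n}. z i' = z i} = 0"
    using fibres[of "z i"] card_block_index_SetC_fibre[OF comp, of "z i"] by simp
  hence "{i'\<in>{1..n}. z i' = z i} = {}" by (subst (asm) card_0_eq) auto
  thus False using assms by blast
qed

lemma fill_blocks_in_block:
  assumes i: "i \<in> {1..n}"
  shows "filled i \<in> {psum \<alpha> (z i) + 1 .. psum \<alpha> (Suc (z i))}"
proof -
  have "card {k\<in>{1..n}. z k = z i \<and> x k < x i} < card {j\<in>{1..n}. z j = z i}"
    using card_less_rank_less[of "{j\<in>{1..n}. z j = z i}" i x] i by (simp add: conj_assoc)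
  also have "\<dots> = \<alpha> ! z i"
    using fibres[of "z i"] card_block_index_SetC_fibre[OF comp] label_less_length[OF i] by simp
  finally show ?thesis using psum_Suc[OF label_less_length[OF i]] i by (simp add: fill_blocks_def)
qed

lemma fill_blocks_block_index:
  assumes "i \<in> {1..n}"
  shows "block_index (SetC \<alpha>) (filled i) = z i" "filled i \<in> {1..n}"
  using fill_blocks_in_block[OF assms] block_index_SetC_fibre[OF comp label_less_length[OF assms]] by blast+

lemma restrict_block_index_filled:
  "z \<in> extensional {1..n} \<Longrightarrow> restrict (\<lambda>i. block_index (SetC \<alpha>) (filled i)) {1..n} = z"
  using fill_blocks_block_index(1) by (auto simp: extensional_def)

lemma fill_blocks_less_iff:
  assumes i: "i \<in> {1..n}" and j: "j \<in> {1..n}" and zz: "z i = z j"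
  shows "filled i < filled j \<longleftrightarrow> x i < x j"
proof -
  have "inj_on x {k\<in>{1..n}. z k = z j}" using inj_Sn[OF perm] by (simp add: inj_on_def inj_def)
  hence "card {k\<in>{k\<in>{1..n}. z k = z j}. x k < x i} < card {k\<in>{k\<in>{1..n}. z k = z j}. x k < x j}
      \<longleftrightarrow> x i < x j"
    using card_less_rank_less_iff[of "{k\<in>{1..n}. z k = z j}" x i j] i j zz by simp
  thus ?thesis using i j zz by (simp add: fill_blocks_def conj_assoc)
qed

lemma fill_blocks_less_of_label_less:
  assumes i: "i \<in> {1..n}" and j: "j \<in> {1..n}" and lt: "z i < z j"
  shows "filled i < filled j"
proof -
  have "psum \<alpha> (Suc (z i)) \<le> psum \<alpha> (z j)"
    using psum_mono[OF comp, of "Suc (z i)" "z j"] label_less_length[OF j] lt by simp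
  thus ?thesis using fill_blocks_in_block[OF i] fill_blocks_in_block[OF j] by simp
qed

lemma fill_blocks_in_Sn: "filled \<in> Sn n"
proof (rule in_SnI)
  show "inj_on (filled) {1..n}"
  proof (rule inj_onI)
    fix i j assume i: "i \<in> {1..n}" and j: "j \<in> {1..n}" and e: "filled i = filled j"
    have "z i = z j" using fill_blocks_block_index(1)[OF i] fill_blocks_block_index(1)[OF j] e by metis
    hence "x i = x j" using fill_blocks_less_iff[OF i j] fill_blocks_less_iff[OF j i] e
      by (metis less_irrefl nat_neq_iff)
    thus "i = j" using inj_Sn[OF perm] by (meson injD)
  qed
qed (use fill_blocks_block_index(2) in \<open>auto simp: fill_blocks_def\<close>)

lemma block_equiv_fill_blocks: "block_equiv n (\<lambda>i. block_index (SetC \<alpha>) (filled i)) (filled) x"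
  unfolding block_equiv_def using fill_blocks_block_index(1) fill_blocks_less_iff by auto

lemma fill_blocks_block_equiv:
  assumes compat: "\<And>i j. i\<in>{1..n} \<Longrightarrow> j\<in>{1..n} \<Longrightarrow> g i = g j \<Longrightarrow> z i < z j \<Longrightarrow> v i < v j"
    and equiv: "block_equiv n (refine_labels g z) v x"
  shows "block_equiv n g v (filled)"
  unfolding block_equiv_def
proof (intro ballI impI)
  fix i j assume i: "i\<in>{1..n}" and j: "j\<in>{1..n}" and gg: "g i = g j"
  show "v i < v j \<longleftrightarrow> filled i < filled j"
  proof (cases "z i = z j")
    case True
    hence "v i < v j \<longleftrightarrow> x i < x j" using equiv i j gg refine_labels_eq_iff unfolding block_equiv_def by blast
    thus ?thesis using fill_blocks_less_iff[OF i j True] by simp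
  next
    case False
    thus ?thesis
      using fill_blocks_less_of_label_less[OF i j] fill_blocks_less_of_label_less[OF j i]
        compat[OF i j gg] compat[OF j i gg[symmetric]] by (meson less_asym nat_neq_iff)
  qed
qed

end

lemma eq_fill_blocks:
  assumes a: "\<alpha> \<in> Comp n" and x: "x \<in> Sn n" and y: "y \<in> Sn n"
    and r: "block_equiv n (\<lambda>i. block_index (SetC \<alpha>) (y i)) y x"
  shows "y = fill_blocks n \<alpha> (\<lambda>i. block_index (SetC \<alpha>) (y i)) x"
proof (rule Sn_eqI[OF y])
  interpret block_filling n \<alpha> "\<lambda>i. block_index (SetC \<alpha>) (y i)" x
    by unfold_locales (use a x card_Sn_preimage[OF y] in auto)
  show "fill_blocks n \<alpha> (\<lambda>i. block_index (SetC \<alpha>) (y i)) x \<in> Sn n" by (rule fill_blocks_in_Sn)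
  fix i assume i: "i \<in> {1..n}"
  let ?bk = "block_index (SetC \<alpha>)"
  define J where "J = ?bk (y i)"
  have J: "J < length \<alpha>" using block_index_SetC_less_length[OF a Sn_in_range[OF y i]] J_def by simp
  have "y i \<in> {b\<in>{1..n}. ?bk b = J}" using Sn_in_range[OF y i] J_def by simp
  hence yi: "y i \<in> {psum \<alpha> J + 1 .. psum \<alpha> (Suc J)}" unfolding block_index_SetC_fibre[OF a J] .
  have "{b\<in>{1..n}. ?bk b = J \<and> b < y i} = {b\<in>{b\<in>{1..n}. ?bk b = J}. b < y i}" by blast
  also have "\<dots> = {b\<in>{psum \<alpha> J + 1 .. psum \<alpha> (Suc J)}. b < y i}"
    unfolding block_index_SetC_fibre[OF a J] ..
  also have "\<dots> = {psum \<alpha> J + 1 ..< y i}" using yi by auto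
  finally have "y i - (psum \<alpha> J + 1) = card {k\<in>{1..n}. ?bk (y k) = J \<and> y k < y i}"
    using card_Sn_preimage[OF y, of "\<lambda>b. ?bk b = J \<and> b < y i"] by simp
  also have "{k\<in>{1..n}. ?bk (y k) = J \<and> y k < y i} = {k\<in>{1..n}. ?bk (y k) = J \<and> x k < x i}"
    using r i unfolding block_equiv_def J_def by auto
  finally have "y i - (psum \<alpha> J + 1) = card {k\<in>{1..n}. ?bk (y k) = J \<and> x k < x i}" .
  moreover have "fill_blocks n \<alpha> (\<lambda>i. ?bk (y i)) x i = psum \<alpha> J + 1 + card {k\<in>{1..n}. ?bk (y k) = J \<and> x k < x i}"
    using i unfolding J_def fill_blocks_def by simp
  moreover have "psum \<alpha> J + 1 \<le> y i" using yi by simp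
  ultimately show "y i = fill_blocks n \<alpha> (\<lambda>i. ?bk (y i)) x i" by linarith
qed

definition block_labellings :: "nat \<Rightarrow> nat list \<Rightarrow> (nat \<Rightarrow> nat) \<Rightarrow> (nat \<Rightarrow> nat) \<Rightarrow> (nat \<Rightarrow> nat) set" where
  "block_labellings n \<alpha> g v =
    (\<lambda>y. restrict (\<lambda>i. block_index (SetC \<alpha>) (y i)) {1..n}) ` {y\<in>Sn n. block_equiv n g v y}"

lemma finite_block_labellings: "finite (block_labellings n \<alpha> g v)"
  unfolding block_labellings_def using finite_Sn by simp

lemma block_labellingsE:
  assumes "z \<in> block_labellings n \<alpha> g v"
  shows "\<And>j. card {i\<in>{1..n}. z i = j} = card {b\<in>{1..n}. block_index (SetC \<alpha>) b = j}"
    and "\<And>i j. i\<in>{1..n} \<Longrightarrow> j\<in>{1..n} \<Longrightarrow> g i = g j \<Longrightarrow> z i < z j \<Longrightarrow> v i < v j"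
proof -
  obtain y where y: "y \<in> Sn n" "block_equiv n g v y"
    and z: "z = restrict (\<lambda>i. block_index (SetC \<alpha>) (y i)) {1..n}"
    using assms unfolding block_labellings_def by blast
  show "card {i\<in>{1..n}. z i = j} = card {b\<in>{1..n}. block_index (SetC \<alpha>) b = j}" for j
  proof -
    have "{i\<in>{1..n}. z i = j} = {i\<in>{1..n}. block_index (SetC \<alpha>) (y i) = j}" using z by auto
    thus ?thesis using card_Sn_preimage[OF y(1), of "\<lambda>b. block_index (SetC \<alpha>) b = j"] by simp
  qed
  show "v i < v j" if "i\<in>{1..n}" "j\<in>{1..n}" "g i = g j" "z i < z j" for i j
  proof -
    have "y i < y j" using that z block_index_less_imp_less[OF finite_SetC] by simp
    thus ?thesis using y(2) that unfolding block_equiv_def by blast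
  qed
qed

lemma block_labellings_extensional: "z \<in> block_labellings n \<alpha> g v \<Longrightarrow> z \<in> extensional {1..n}"
  unfolding block_labellings_def by auto

lemma block_filling_of_block_labellings:
  "\<alpha> \<in> Comp n \<Longrightarrow> x \<in> Sn n \<Longrightarrow> z \<in> block_labellings n \<alpha> g v \<Longrightarrow> block_filling n \<alpha> z x"
  by unfold_locales (use block_labellingsE(1) in auto)

lemma mem_block_labellingsI:
  assumes a: "\<alpha> \<in> Comp n" and v: "v \<in> Sn n" and z: "z \<in> extensional {1..n}"
    and fibres: "\<And>j. card {i\<in>{1..n}. z i = j} = card {b\<in>{1..n}. block_index (SetC \<alpha>) b = j}"
    and compat: "\<And>i j. i\<in>{1..n} \<Longrightarrow> j\<in>{1..n} \<Longrightarrow> g i = g j \<Longrightarrow> z i < z j \<Longrightarrow> v i < v j"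
  shows "z \<in> block_labellings n \<alpha> g v"
proof -
  interpret block_filling n \<alpha> z v by unfold_locales (use a v fibres in auto)
  have "restrict (\<lambda>i. block_index (SetC \<alpha>) (filled i)) {1..n} = z"
    using restrict_block_index_filled z by simp
  moreover have "filled \<in> {y\<in>Sn n. block_equiv n g v y}"
    using fill_blocks_in_Sn fill_blocks_block_equiv[OF compat block_equiv_refl] by blast
  ultimately show ?thesis unfolding block_labellings_def by (rule image_eqI[OF sym])
qed

lemma card_block_equiv_pairs:
  assumes a: "\<alpha> \<in> Comp n" and x: "x \<in> Sn n"
  shows "card {y\<in>Sn n. block_equiv n g v y \<and> block_equiv n (\<lambda>i. block_index (SetC \<alpha>) (y i)) y x}
       = card {z\<in>block_labellings n \<alpha> g v. block_equiv n (refine_labels g z) v x}"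
proof (rule bij_betw_same_card[of "\<lambda>y. restrict (\<lambda>i. block_index (SetC \<alpha>) (y i)) {1..n}"])
  let ?bk = "block_index (SetC \<alpha>)"
  let ?f = "\<lambda>y. restrict (\<lambda>i. ?bk (y i)) {1..n}"
  let ?Y = "{y\<in>Sn n. block_equiv n g v y \<and> block_equiv n (\<lambda>i. ?bk (y i)) y x}"
  let ?Z = "{z\<in>block_labellings n \<alpha> g v. block_equiv n (refine_labels g z) v x}"
  show "bij_betw ?f ?Y ?Z"
    unfolding bij_betw_def
  proof (intro conjI)
    show "inj_on ?f ?Y"
    proof (rule inj_onI)
      fix y y' assume y: "y \<in> ?Y" and y': "y' \<in> ?Y" and e: "?f y = ?f y'"
      have "y = fill_blocks n \<alpha> (?f y) x"
        unfolding fill_blocks_restrict using eq_fill_blocks[OF a x, of y] y by simp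
      moreover have "y' = fill_blocks n \<alpha> (?f y') x"
        unfolding fill_blocks_restrict using eq_fill_blocks[OF a x, of y'] y' by simp
      ultimately show "y = y'" using e by simp
    qed
  next
    show "?f ` ?Y = ?Z"
    proof (intro equalityI subsetI)
      fix z assume "z \<in> ?f ` ?Y"
      then obtain y where y: "y \<in> ?Y" and z: "z = ?f y" by blast
      have "z \<in> block_labellings n \<alpha> g v" unfolding block_labellings_def using y z by blast
      moreover have "block_equiv n (refine_labels g z) v x"
        unfolding block_equiv_def
      proof (intro ballI impI)
        fix i j assume i: "i\<in>{1..n}" and j: "j\<in>{1..n}" and "refine_labels g z i = refine_labels g z j"
        hence "g i = g j" "?bk (y i) = ?bk (y j)" using z refine_labels_eq_iff by auto
        thus "v i < v j \<longleftrightarrow> x i < x j" using y i j unfolding block_equiv_def by blast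
      qed
      ultimately show "z \<in> ?Z" by simp
    next
      fix z assume z: "z \<in> ?Z"
      have zZ: "z \<in> block_labellings n \<alpha> g v" using z by simp
      interpret block_filling n \<alpha> z x using block_filling_of_block_labellings[OF a x zZ] .
      have fz: "?f filled = z" by (rule restrict_block_index_filled[OF block_labellings_extensional[OF zZ]])
      have "filled \<in> ?Y"
        using fill_blocks_in_Sn block_equiv_fill_blocks fill_blocks_block_equiv block_labellingsE(2) z by auto
      from image_eqI[where f = ?f, OF fz[symmetric] this] show "z \<in> ?f ` ?Y" .
    qed
  qed
qed

lemma B_comp_mult_block_class:
  assumes a: "\<alpha> \<in> Comp n"
  shows "gmult n (B_comp n \<alpha>) (block_class n g v)
       = (\<lambda>x. \<Sum>z\<in>block_labellings n \<alpha> g v. block_class n (refine_labels g z) v x)"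
proof
  fix x
  let ?bk = "block_index (SetC \<alpha>)"
  show "gmult n (B_comp n \<alpha>) (block_class n g v) x
      = (\<Sum>z\<in>block_labellings n \<alpha> g v. block_class n (refine_labels g z) v x)"
  proof (cases "x \<in> Sn n")
    case True
    have "gmult n (B_comp n \<alpha>) (block_class n g v) x
        = (\<Sum>y\<in>Sn n. if block_equiv n g v y \<and> block_equiv n (\<lambda>i. ?bk (y i)) y x then 1 else 0)"
      using True by (auto simp: gmult_apply B_comp_def gmult_BI_apply[OF True _ finite_SetC]
          block_class_def intro!: sum.cong)
    also have "\<dots> = of_nat (card {z\<in>block_labellings n \<alpha> g v. block_equiv n (refine_labels g z) v x})"
      by (simp add: sum_indicator_eq_card finite_Sn card_block_equiv_pairs[OF a True])
    also have "\<dots> = (\<Sum>z\<in>block_labellings n \<alpha> g v. block_class n (refine_labels g z) v x)"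
      using True by (simp add: sum_indicator_eq_card finite_block_labellings block_class_def)
    finally show ?thesis .
  qed (simp add: gmult_apply block_class_def)
qed

definition num_blocks :: "nat \<Rightarrow> (nat \<Rightarrow> nat) \<Rightarrow> nat" where
  "num_blocks n g = card (g ` {1..n})"

lemma refines_obtain_factor:
  assumes "\<And>i j. i \<in> A \<Longrightarrow> j \<in> A \<Longrightarrow> h i = h j \<Longrightarrow> g i = g j"
  obtains \<phi> where "\<And>i. i \<in> A \<Longrightarrow> g i = \<phi> (h i)"
proof
  fix i assume i: "i \<in> A"
  hence "\<exists>i'. i' \<in> A \<and> h i' = h i" by blast
  hence "(SOME i'. i' \<in> A \<and> h i' = h i) \<in> A \<and> h (SOME i'. i' \<in> A \<and> h i' = h i) = h i"
    by (rule someI_ex)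
  thus "g i = (\<lambda>l. g (SOME i'. i' \<in> A \<and> h i' = l)) (h i)" using assms i by metis
qed

lemma card_image_eq_of_same_fibres:
  assumes "\<And>i j. i \<in> A \<Longrightarrow> j \<in> A \<Longrightarrow> g i = g j \<longleftrightarrow> h i = h j"
  shows "card (g ` A) = card (h ` A)"
proof -
  obtain \<phi> where \<phi>: "\<And>i. i \<in> A \<Longrightarrow> g i = \<phi> (h i)"
    using refines_obtain_factor[of A h g] assms by blast
  have "g ` A = \<phi> ` h ` A" using \<phi> by (auto simp: image_image intro!: image_cong)
  moreover have "inj_on \<phi> (h ` A)" using \<phi> assms by (auto simp: inj_on_def)
  ultimately show ?thesis by (simp add: card_image)
qed

lemma card_image_less_of_strict_refinement:
  assumes "finite A" and ref: "\<And>i j. i \<in> A \<Longrightarrow> j \<in> A \<Longrightarrow> h i = h j \<Longrightarrow> g i = g j"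
    and split: "i0 \<in> A" "j0 \<in> A" "g i0 = g j0" "h i0 \<noteq> h j0"
  shows "card (g ` A) < card (h ` A)"
proof -
  obtain \<phi> where \<phi>: "\<And>i. i \<in> A \<Longrightarrow> g i = \<phi> (h i)"
    using refines_obtain_factor[of A h g] ref by blast
  have "g ` A = \<phi> ` h ` A" using \<phi> by (auto simp: image_image intro!: image_cong)
  moreover have "\<not> inj_on \<phi> (h ` A)"
    using \<phi> split by (metis image_eqI inj_onD)
  ultimately show ?thesis
    using card_image_le[of "h ` A" \<phi>] inj_on_iff_eq_card[of "h ` A" \<phi>] assms(1) by simp
qed

definition block_constant_labellings ::
  "nat \<Rightarrow> nat list \<Rightarrow> (nat \<Rightarrow> nat) \<Rightarrow> (nat \<Rightarrow> nat) \<Rightarrow> (nat \<Rightarrow> nat) set" where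
  "block_constant_labellings n \<alpha> g v =
    {z\<in>block_labellings n \<alpha> g v. \<forall>i\<in>{1..n}. \<forall>j\<in>{1..n}. g i = g j \<longrightarrow> z i = z j}"

lemma B_comp_mult_block_class_split:
  assumes "\<alpha> \<in> Comp n"
  shows "gmult n (B_comp n \<alpha>) (block_class n g v)
       = (\<lambda>x. of_nat (card (block_constant_labellings n \<alpha> g v)) * block_class n g v x
            + (\<Sum>z\<in>block_labellings n \<alpha> g v - block_constant_labellings n \<alpha> g v.
                 block_class n (refine_labels g z) v x))"
proof
  fix x
  let ?Z = "block_labellings n \<alpha> g v"
  let ?C = "block_constant_labellings n \<alpha> g v"
  let ?F = "\<lambda>z. block_class n (refine_labels g z) v x"
  have cls: "block_class n (refine_labels g z) v = block_class n g v" if "z \<in> ?C" for z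
  proof (rule block_class_cong)
    fix i j assume "i \<in> {1..n}" "j \<in> {1..n}"
    thus "refine_labels g z i = refine_labels g z j \<longleftrightarrow> g i = g j"
      using that unfolding refine_labels_eq_iff block_constant_labellings_def by blast
  qed
  have "sum ?F ?C = (\<Sum>z\<in>?C. block_class n g v x)" by (rule sum.cong) (simp_all add: cls)
  hence const: "sum ?F ?C = of_nat (card ?C) * block_class n g v x" by simp
  have split: "sum ?F ?Z = sum ?F ?C + sum ?F (?Z - ?C)"
    using sum.subset_diff[OF _ finite_block_labellings, of ?C n \<alpha> g v ?F]
    by (simp add: block_constant_labellings_def add.commute)
  show "gmult n (B_comp n \<alpha>) (block_class n g v) x
      = of_nat (card ?C) * block_class n g v x + sum ?F (?Z - ?C)"
    unfolding B_comp_mult_block_class[OF assms] split const ..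
qed

lemma num_blocks_refine_labels_less:
  assumes "z \<in> block_labellings n \<alpha> g v - block_constant_labellings n \<alpha> g v"
  shows "num_blocks n g < num_blocks n (refine_labels g z)"
proof -
  obtain i0 j0 where "i0 \<in> {1..n}" "j0 \<in> {1..n}" "g i0 = g j0" "z i0 \<noteq> z j0"
    using assms unfolding block_constant_labellings_def by blast
  thus ?thesis unfolding num_blocks_def
    by (intro card_image_less_of_strict_refinement[of _ _ _ i0 j0]) (auto simp: refine_labels_eq_iff)
qed

lemma card_comp_fibre_eq_sum:
  fixes g :: "'a \<Rightarrow> nat"
  assumes "\<And>i. i \<in> A \<Longrightarrow> g i < m" "finite A"
  shows "card {i\<in>A. f (g i) = j} = (\<Sum>k | k < m \<and> f k = j. card {i\<in>A. g i = k})"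
proof -
  have "{i\<in>A. f (g i) = j} = (\<Union>k\<in>{k. k < m \<and> f k = j}. {i\<in>A. g i = k})"
    using assms(1) by auto
  moreover have "card (\<Union>k\<in>{k. k < m \<and> f k = j}. {i\<in>A. g i = k})
      = (\<Sum>k | k < m \<and> f k = j. card {i\<in>A. g i = k})"
    by (rule card_UN_disjoint) (auto simp: assms(2))
  ultimately show ?thesis by simp
qed

locale composition_labelling =
  fixes n :: nat and \<beta> :: "nat list" and w :: "nat \<Rightarrow> nat"
  assumes comp: "\<beta> \<in> Comp n" and perm: "w \<in> Sn n"
begin

abbreviation lab where "lab i \<equiv> block_index (SetC \<beta>) (w i)"

abbreviation eta_maps :: "nat list \<Rightarrow> (nat \<Rightarrow> nat) set" where
  "eta_maps \<alpha> \<equiv> {f \<in> {0..<length \<beta>} \<rightarrow>\<^sub>E {0..<length \<alpha>}.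
      \<forall>j < length \<alpha>. \<alpha> ! j = (\<Sum>i\<in>{i. i < length \<beta> \<and> f i = j}. \<beta> ! i)}"

lemma lab_less_length: "i \<in> {1..n} \<Longrightarrow> lab i < length \<beta>"
  using block_index_SetC_less_length[OF comp Sn_in_range[OF perm]] .

lemma card_lab_fibre: "k < length \<beta> \<Longrightarrow> card {i\<in>{1..n}. lab i = k} = \<beta> ! k"
  using card_Sn_preimage[OF perm, of "\<lambda>b. block_index (SetC \<beta>) b = k"]
    card_block_index_SetC_fibre[OF comp, of k] by simp

lemma lab_surj:
  assumes "k < length \<beta>"
  obtains i where "i \<in> {1..n}" "lab i = k"
proof -
  have "{i\<in>{1..n}. lab i = k} \<noteq> {}"
    using card_lab_fibre[OF assms] Comp_nth_pos[OF comp assms] by (metis card.empty less_irrefl)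
  thus ?thesis using that by blast
qed

lemma card_comp_lab_fibre:
  "card {i\<in>{1..n}. f (lab i) = j} = (\<Sum>k | k < length \<beta> \<and> f k = j. \<beta> ! k)"
proof -
  have "card {i\<in>{1..n}. f (lab i) = j} = (\<Sum>k | k < length \<beta> \<and> f k = j. card {i\<in>{1..n}. lab i = k})"
    by (rule card_comp_fibre_eq_sum) (simp_all add: lab_less_length)
  also have "\<dots> = (\<Sum>k | k < length \<beta> \<and> f k = j. \<beta> ! k)"
    by (rule sum.cong[OF refl], rule card_lab_fibre) simp
  finally show ?thesis .
qed

lemma comp_lab_in_block_constant_labellings:
  assumes a: "\<alpha> \<in> Comp n" and f: "f \<in> eta_maps \<alpha>"
  shows "restrict (\<lambda>i. f (lab i)) {1..n} \<in> block_constant_labellings n \<alpha> lab w"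
proof -
  let ?z = "restrict (\<lambda>i. f (lab i)) {1..n}"
  have "card {i\<in>{1..n}. ?z i = j} = card {b\<in>{1..n}. block_index (SetC \<alpha>) b = j}" for j
  proof -
    have "{i\<in>{1..n}. ?z i = j} = {i\<in>{1..n}. f (lab i) = j}" by auto
    hence "card {i\<in>{1..n}. ?z i = j} = (\<Sum>k | k < length \<beta> \<and> f k = j. \<beta> ! k)"
      using card_comp_lab_fibre[of f j] by simp
    also have "\<dots> = (if j < length \<alpha> then \<alpha> ! j else 0)"
    proof (cases "j < length \<alpha>")
      case False
      hence "{k. k < length \<beta> \<and> f k = j} = {}" using f by (auto simp: PiE_iff)
      hence "(\<Sum>k | k < length \<beta> \<and> f k = j. \<beta> ! k) = 0" by (simp only: sum.empty)
      thus ?thesis using False by simp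
    qed (use f in auto)
    finally show ?thesis using card_block_index_SetC_fibre[OF a] by simp
  qed
  hence "?z \<in> block_labellings n \<alpha> lab w"
    by (intro mem_block_labellingsI[OF a perm]) auto
  thus ?thesis unfolding block_constant_labellings_def by auto
qed

lemma block_constant_labelling_factors:
  assumes a: "\<alpha> \<in> Comp n" and z: "z \<in> block_constant_labellings n \<alpha> lab w"
  obtains f where "f \<in> eta_maps \<alpha>" "z = restrict (\<lambda>i. f (lab i)) {1..n}"
proof -
  have const: "\<And>i j. i\<in>{1..n} \<Longrightarrow> j\<in>{1..n} \<Longrightarrow> lab i = lab j \<Longrightarrow> z i = z j"
    and zZ: "z \<in> block_labellings n \<alpha> lab w"
    using z unfolding block_constant_labellings_def by blast+
  interpret block_filling n \<alpha> z w using block_filling_of_block_labellings[OF a perm zZ] .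
  define pick where "pick k = (SOME i. i \<in> {1..n} \<and> lab i = k)" for k
  have pick: "pick k \<in> {1..n} \<and> lab (pick k) = k" if k: "k < length \<beta>" for k
  proof -
    obtain i where "i \<in> {1..n}" "lab i = k" using lab_surj[OF k] .
    hence "\<exists>i. i \<in> {1..n} \<and> lab i = k" by blast
    thus ?thesis unfolding pick_def by (rule someI_ex)
  qed
  define f where "f = restrict (\<lambda>k. z (pick k)) {0..<length \<beta>}"
  have flab: "f (lab i) = z i" if i: "i \<in> {1..n}" for i
  proof -
    have k: "lab i < length \<beta>" by (rule lab_less_length[OF i])
    hence "f (lab i) = z (pick (lab i))" unfolding f_def by simp
    also have "\<dots> = z i" using const[of "pick (lab i)" i] pick[OF k] i by simp
    finally show ?thesis .
  qed
  have "z = restrict (\<lambda>i. f (lab i)) {1..n}"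
    by (rule extensionalityI[OF block_labellings_extensional[OF zZ]]) (simp_all add: flab)
  moreover have "f \<in> {0..<length \<beta>} \<rightarrow>\<^sub>E {0..<length \<alpha>}"
    using pick label_less_length unfolding f_def by auto
  moreover have "\<alpha> ! j = (\<Sum>k | k < length \<beta> \<and> f k = j. \<beta> ! k)" if j: "j < length \<alpha>" for j
  proof -
    have "\<alpha> ! j = card {i\<in>{1..n}. z i = j}"
      using fibres[of j] card_block_index_SetC_fibre[OF a] j by simp
    also have "{i\<in>{1..n}. z i = j} = {i\<in>{1..n}. f (lab i) = j}" using flab by auto
    finally show ?thesis using card_comp_lab_fibre by simp
  qed
  ultimately show ?thesis using that by blast
qed

lemma card_block_constant_labellings:
  assumes a: "\<alpha> \<in> Comp n"
  shows "card (block_constant_labellings n \<alpha> lab w) = eta \<beta> \<alpha>"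
proof -
  let ?\<Phi> = "\<lambda>f. restrict (\<lambda>i. f (lab i)) {1..n}"
  have "inj_on ?\<Phi> (eta_maps \<alpha>)"
  proof (rule inj_onI)
    fix f f' assume f: "f \<in> eta_maps \<alpha>" and f': "f' \<in> eta_maps \<alpha>" and e: "?\<Phi> f = ?\<Phi> f'"
    have "f \<in> {0..<length \<beta>} \<rightarrow>\<^sub>E {0..<length \<alpha>}" "f' \<in> {0..<length \<beta>} \<rightarrow>\<^sub>E {0..<length \<alpha>}"
      using f f' by blast+
    thus "f = f'"
    proof (rule PiE_ext)
      fix k assume "k \<in> {0..<length \<beta>}"
      then obtain i where "i \<in> {1..n}" "lab i = k" using lab_surj by auto
      thus "f k = f' k" using fun_cong[OF e, of i] by simp
    qed
  qed
  moreover have "?\<Phi> ` eta_maps \<alpha> = block_constant_labellings n \<alpha> lab w"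
  proof (intro equalityI subsetI)
    fix z assume "z \<in> ?\<Phi> ` eta_maps \<alpha>"
    thus "z \<in> block_constant_labellings n \<alpha> lab w"
      using comp_lab_in_block_constant_labellings[OF a] by blast
  next
    fix z assume "z \<in> block_constant_labellings n \<alpha> lab w"
    then obtain f where "f \<in> eta_maps \<alpha>" "z = ?\<Phi> f" by (rule block_constant_labelling_factors[OF a])
    thus "z \<in> ?\<Phi> ` eta_maps \<alpha>" by blast
  qed
  ultimately have "bij_betw ?\<Phi> (eta_maps \<alpha>) (block_constant_labellings n \<alpha> lab w)"
    unfolding bij_betw_def ..
  from bij_betw_same_card[OF this] show ?thesis unfolding eta_def by simp
qed

end

lemma LRM_subset: "LRM n w \<subseteq> {1..n}"
  unfolding LRM_def by auto

lemma finite_LRM: "finite (LRM n w)"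
  using finite_subset[OF LRM_subset] by blast

lemma LRM'_eq_image: "LRM' n w = (\<lambda>l. l - 1) ` (LRM n w - {1})"
  unfolding LRM'_def using LRM_subset by force

lemma LRM'_subset: "LRM' n w \<subseteq> {1..n-1}"
  unfolding LRM'_eq_image using LRM_subset by fastforce

lemma finite_LRM': "finite (LRM' n w)"
  unfolding LRM'_eq_image using finite_LRM by simp

lemma one_in_LRM:
  assumes w: "w \<in> Sn n" and n: "1 \<le> n"
  shows "1 \<in> LRM n w"
  unfolding LRM_def
proof (intro CollectI conjI allI impI)
  show "1 \<in> {1..n}" using n by simp
  fix k assume k: "1 \<le> k \<and> k < inv w 1"
  have "inv w 1 \<in> {1..n}" using Sn_in_range[OF inv_in_Sn[OF w]] n by simp
  hence "w k \<in> {1..n}" using k Sn_in_range[OF w] by simp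
  moreover have "w k \<noteq> 1" using k Sn_inv_apply[OF w, of k] by (metis less_irrefl)
  ultimately show "w k > 1" by simp
qed

lemma card_LRM':
  assumes "w \<in> Sn n" "1 \<le> n"
  shows "card (LRM' n w) + 1 = card (LRM n w)"
proof -
  have "inj_on (\<lambda>l. l - 1) (LRM n w - {1})"
    using LRM_subset by (intro inj_onI) force
  hence "card (LRM' n w) = card (LRM n w - {1})" unfolding LRM'_eq_image by (rule card_image)
  thus ?thesis using one_in_LRM[OF assms] finite_LRM by (metis card_Suc_Diff1 Suc_eq_plus1)
qed

lemma cLRM': "cLRM' n w \<in> Comp n" "SetC (cLRM' n w) = LRM' n w"
  unfolding cLRM'_def using CompOf[OF LRM'_subset] by auto

lemma length_cLRM':
  assumes w: "w \<in> Sn n"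
  shows "length (cLRM' n w) = card (LRM n w)"
proof (cases "n = 0")
  case True
  have "cLRM' n w = []" using cLRM'(1)[of n w] True by (cases "cLRM' n w") (auto simp: Comp_def)
  moreover have "LRM n w = {}" using LRM_subset[of n w] True by auto
  ultimately show ?thesis by simp
next
  case False
  hence "cLRM' n w \<noteq> []" using cLRM'(1)[of n w] by (auto simp: Comp_def)
  thus ?thesis using card_SetC[OF cLRM'(1)] card_LRM'[OF w] False cLRM'(2) by simp
qed

lemma num_blocks_LRM':
  assumes w: "w \<in> Sn n"
  shows "num_blocks n (\<lambda>i. block_index (LRM' n w) (w i)) = card (LRM n w)"
proof -
  have "(\<lambda>i. block_index (LRM' n w) (w i)) ` {1..n} = block_index (SetC (cLRM' n w)) ` w ` {1..n}"
    using cLRM'(2) by (simp add: image_image)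
  also have "\<dots> = {0..<length (cLRM' n w)}"
    unfolding Sn_image[OF w] by (rule block_index_SetC_image[OF cLRM'(1)])
  finally show ?thesis unfolding num_blocks_def using length_cLRM'[OF w] by simp
qed

lemma block_index_LRM'_eq_iff:
  assumes "1 \<le> a" "a \<le> b"
  shows "block_index (LRM' n w) a = block_index (LRM' n w) b \<longleftrightarrow> \<not> (\<exists>l\<in>LRM n w. a < l \<and> l \<le> b)"
proof -
  have "(\<exists>t\<in>LRM' n w. a \<le> t \<and> t < b) \<longleftrightarrow> (\<exists>l\<in>LRM n w. a < l \<and> l \<le> b)"
  proof
    assume "\<exists>t\<in>LRM' n w. a \<le> t \<and> t < b"
    then obtain l where "l \<in> LRM n w" "l > 1" "a \<le> l - 1" "l - 1 < b" unfolding LRM'_def by blast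
    thus "\<exists>l\<in>LRM n w. a < l \<and> l \<le> b" by (intro bexI[of _ l]) auto
  next
    assume "\<exists>l\<in>LRM n w. a < l \<and> l \<le> b"
    then obtain l where l: "l \<in> LRM n w" "a < l" "l \<le> b" by blast
    hence "l - 1 \<in> LRM' n w" using assms unfolding LRM'_def by auto
    thus "\<exists>t\<in>LRM' n w. a \<le> t \<and> t < b" using l by (intro bexI[of _ "l - 1"]) auto
  qed
  thus ?thesis unfolding block_index_eq_iff[OF finite_LRM' assms(2)] by (rule arg_cong)
qed

lemma lrm_basis_eq_block_class:
  "w \<in> Sn n \<Longrightarrow> lrm_basis n w = block_class n (\<lambda>i. block_index (LRM' n w) (w i)) w"
  unfolding lrm_basis_def by (rule BI_mult_delta[OF _ finite_LRM'])

lemma lrm_basis_diag: "w \<in> Sn n \<Longrightarrow> lrm_basis n w w = 1"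
  by (simp add: lrm_basis_eq_block_class block_class_def block_equiv_refl)

definition in_lrm_span :: "nat \<Rightarrow> nat \<Rightarrow> ((nat \<Rightarrow> nat) \<Rightarrow> 'k::comm_ring_1) \<Rightarrow> bool" where
  "in_lrm_span n m X \<longleftrightarrow> (\<exists>c. X = (\<lambda>v. \<Sum>u\<in>Sn n. c u * lrm_basis n u v)
                                \<and> (\<forall>u\<in>Sn n. c u \<noteq> 0 \<longrightarrow> m \<le> card (LRM n u)))"

lemma in_lrm_span_zero: "in_lrm_span n m (\<lambda>v. 0)"
  unfolding in_lrm_span_def by (rule exI[of _ "\<lambda>_. 0"]) simp

lemma in_lrm_span_add:
  assumes "in_lrm_span n m X" "in_lrm_span n m Y"
  shows "in_lrm_span n m (\<lambda>v. X v + Y v)"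
proof -
  obtain c d where c: "X = (\<lambda>v. \<Sum>u\<in>Sn n. c u * lrm_basis n u v)" "\<forall>u\<in>Sn n. c u \<noteq> 0 \<longrightarrow> m \<le> card (LRM n u)"
    and d: "Y = (\<lambda>v. \<Sum>u\<in>Sn n. d u * lrm_basis n u v)" "\<forall>u\<in>Sn n. d u \<noteq> 0 \<longrightarrow> m \<le> card (LRM n u)"
    using assms unfolding in_lrm_span_def by blast
  show ?thesis unfolding in_lrm_span_def
  proof (intro exI[of _ "\<lambda>u. c u + d u"] conjI)
    show "(\<lambda>v. X v + Y v) = (\<lambda>v. \<Sum>u\<in>Sn n. (c u + d u) * lrm_basis n u v)"
      unfolding c(1) d(1) by (simp add: distrib_right sum.distrib)
  qed (use c(2) d(2) in force)
qed

lemma in_lrm_span_scale: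
  assumes "in_lrm_span n m X"
  shows "in_lrm_span n m (\<lambda>v. r * X v)"
proof -
  obtain c where c: "X = (\<lambda>v. \<Sum>u\<in>Sn n. c u * lrm_basis n u v)" "\<forall>u\<in>Sn n. c u \<noteq> 0 \<longrightarrow> m \<le> card (LRM n u)"
    using assms unfolding in_lrm_span_def by blast
  show ?thesis unfolding in_lrm_span_def
  proof (intro exI[of _ "\<lambda>u. r * c u"] conjI)
    show "(\<lambda>v. r * X v) = (\<lambda>v. \<Sum>u\<in>Sn n. (r * c u) * lrm_basis n u v)"
      unfolding c(1) by (simp add: sum_distrib_left mult.assoc)
  qed (use c(2) in force)
qed

lemma in_lrm_span_diff:
  "in_lrm_span n m X \<Longrightarrow> in_lrm_span n m Y \<Longrightarrow> in_lrm_span n m (\<lambda>v. X v - Y v)"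
  using in_lrm_span_add[OF _ in_lrm_span_scale, of n m X Y "- 1"] by simp

lemma in_lrm_span_mono: "in_lrm_span n m X \<Longrightarrow> m' \<le> m \<Longrightarrow> in_lrm_span n m' X"
  unfolding in_lrm_span_def by force

lemma in_lrm_span_sum:
  "(\<And>a. a \<in> A \<Longrightarrow> in_lrm_span n m (F a)) \<Longrightarrow> in_lrm_span n m (\<lambda>v. \<Sum>a\<in>A. F a v)"
proof (induction A rule: infinite_finite_induct)
  case (insert a A)
  thus ?case using in_lrm_span_add[of n m "F a" "\<lambda>v. \<Sum>a\<in>A. F a v"] by simp
qed (simp_all add: in_lrm_span_zero)

lemma in_lrm_span_lrm_basis:
  assumes "u \<in> Sn n" "m \<le> card (LRM n u)"
  shows "in_lrm_span n m (lrm_basis n u)"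
  unfolding in_lrm_span_def
proof (intro exI[of _ "\<lambda>u'. if u' = u then 1 else 0"] conjI)
  show "lrm_basis n u = (\<lambda>v. \<Sum>u'\<in>Sn n. (if u' = u then 1 else 0) * lrm_basis n u' v)"
  proof
    fix v show "lrm_basis n u v = (\<Sum>u'\<in>Sn n. (if u' = u then 1 else 0) * lrm_basis n u' v)"
      using sum_delta_mult[OF finite_Sn assms(1), of 1 "\<lambda>u. lrm_basis n u v"] by (simp only: mult_1) (rule sym)
  qed
qed (use assms(2) in simp)

lemma in_lrm_span_indicator:
  assumes "X \<subseteq> Sn n"
    and "\<And>x. x \<in> X \<Longrightarrow> in_lrm_span n m (block_class n g x :: (nat \<Rightarrow> nat) \<Rightarrow> 'k::comm_ring_1)"
    and "\<And>x y. x \<in> X \<Longrightarrow> y \<in> Sn n \<Longrightarrow> block_equiv n g x y \<Longrightarrow> y \<in> X"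
  shows "in_lrm_span n m (\<lambda>v. if v \<in> X then (1::'k) else 0)"
  using assms
proof (induction "card X" arbitrary: X rule: less_induct)
  case less
  show ?case
  proof (cases "X = {}")
    case True thus ?thesis using in_lrm_span_zero by simp
  next
    case False
    then obtain x where x: "x \<in> X" by blast
    define C where "C = {y\<in>Sn n. block_equiv n g x y}"
    have CX: "C \<subseteq> X" using less.prems(3) x C_def by blast
    have lt: "card (X - C) < card X"
      using x less.prems(1) block_equiv_refl finite_subset[OF _ finite_Sn]
      by (intro psubset_card_mono) (auto simp: C_def)
    have closed: "y' \<in> X - C" if y: "y \<in> X - C" and y': "y' \<in> Sn n" "block_equiv n g y y'" for y y'
    proof -
      have "y' \<notin> C"
      proof
        assume "y' \<in> C"
        hence "block_equiv n g x y" using y' block_equiv_sym block_equiv_trans unfolding C_def by blast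
        thus False using y less.prems(1) unfolding C_def by blast
      qed
      thus ?thesis using less.prems(3) y y' by blast
    qed
    have rest: "in_lrm_span n m (\<lambda>v. if v \<in> X - C then (1::'k) else 0)"
    proof (rule less.hyps[OF lt])
      show "X - C \<subseteq> Sn n" using less.prems(1) by blast
      show "in_lrm_span n m (block_class n g y :: (nat \<Rightarrow> nat) \<Rightarrow> 'k)" if "y \<in> X - C" for y
        using less.prems(2) that by blast
    qed (rule closed)
    have split: "(\<lambda>v. if v \<in> X then (1::'k) else 0) = (\<lambda>v. block_class n g x v + (if v \<in> X - C then 1 else 0))"
    proof
      fix v show "(if v \<in> X then (1::'k) else 0) = block_class n g x v + (if v \<in> X - C then 1 else 0)"
        using CX unfolding block_class_def C_def by (cases "v \<in> C") (auto simp: C_def)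
    qed
    show ?thesis unfolding split by (rule in_lrm_span_add[OF less.prems(2)[OF x] rest])
  qed
qed

text \<open>The leader of a block of \<open>g\<close> is its smallest position; \<open>(i, j)\<close> is a leader inversion
  when \<open>i\<close> is a leader and \<open>v\<close> puts a later member \<open>j\<close> of its block below it.\<close>

definition leader_inversions :: "nat \<Rightarrow> (nat \<Rightarrow> nat) \<Rightarrow> (nat \<Rightarrow> nat) \<Rightarrow> (nat \<times> nat) set" where
  "leader_inversions n g v = {(i, j). i \<in> {1..n} \<and> j \<in> {1..n} \<and> g j = g i \<and> v j < v i
                                      \<and> (\<forall>k\<in>{1..n}. g k = g i \<longrightarrow> i \<le> k)}"

lemma finite_leader_inversions: "finite (leader_inversions n g v)"
  by (rule finite_subset[of _ "{1..n} \<times> {1..n}"]) (auto simp: leader_inversions_def)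

locale leader_layout =
  fixes n :: nat and g v :: "nat \<Rightarrow> nat"
  assumes perm: "v \<in> Sn n" and no_inversions: "leader_inversions n g v = {}"
begin

definition block_of :: "nat \<Rightarrow> nat set" where "block_of i = {k\<in>{1..n}. g k = g i}"
definition leader :: "nat \<Rightarrow> nat" where "leader i = Min (block_of i)"
definition before :: "nat \<Rightarrow> nat" where "before i = card {k\<in>{1..n}. leader i < leader k}"
definition rank :: "nat \<Rightarrow> nat" where "rank i = card {k\<in>block_of i. v k < v i}"

text \<open>Blocks occupy consecutive intervals of values, blocks with later leaders receiving smaller
  values; inside a block the order of \<open>v\<close> is kept.\<close>

definition layout :: "nat \<Rightarrow> nat" where
  "layout i = (if i \<in> {1..n} then before i + rank i + 1 else i)"

lemma finite_block_of: "finite (block_of i)"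
  by (simp add: block_of_def)

lemma leader_min:
  assumes "i \<in> {1..n}"
  shows "leader i \<in> block_of i \<and> (\<forall>k\<in>block_of i. leader i \<le> k)"
proof -
  have "block_of i \<noteq> {}" using assms unfolding block_of_def by blast
  thus ?thesis unfolding leader_def using Min_in[OF finite_block_of] Min_le[OF finite_block_of] by blast
qed

lemma leader_mem: "i \<in> {1..n} \<Longrightarrow> leader i \<in> {1..n} \<and> g (leader i) = g i"
  using leader_min unfolding block_of_def by simp

lemma leader_le: "i \<in> {1..n} \<Longrightarrow> leader i \<le> i"
  using leader_min unfolding block_of_def by simp

lemma block_of_leader: "i \<in> {1..n} \<Longrightarrow> block_of (leader i) = block_of i"
  using leader_mem unfolding block_of_def by simp

lemma leader_leader: "i \<in> {1..n} \<Longrightarrow> leader (leader i) = leader i"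
  using block_of_leader unfolding leader_def by simp

lemma leader_eq_iff:
  assumes "i \<in> {1..n}" "j \<in> {1..n}"
  shows "leader i = leader j \<longleftrightarrow> g i = g j"
proof
  assume "leader i = leader j" thus "g i = g j" using leader_mem[OF assms(1)] leader_mem[OF assms(2)] by simp
next
  assume "g i = g j" thus "leader i = leader j" unfolding leader_def block_of_def by simp
qed

lemma v_leader_le:
  assumes i: "i \<in> {1..n}" and j: "j \<in> block_of i"
  shows "v (leader i) \<le> v j"
proof -
  have "(leader i, j) \<notin> leader_inversions n g v" using no_inversions by simp
  thus ?thesis using leader_mem[OF i] leader_min[OF i] j unfolding leader_inversions_def block_of_def
    by auto
qed

lemma rank_less: "i \<in> {1..n} \<Longrightarrow> rank i < card (block_of i)"
  unfolding rank_def by (rule card_less_rank_less[OF finite_block_of]) (simp add: block_of_def)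

lemma before_add_card_le:
  assumes i: "i \<in> {1..n}" and i': "i' \<in> {1..n}" and lt: "leader i < leader i'"
  shows "before i' + card (block_of i') \<le> before i"
proof -
  have in_block: "leader k = leader i'" if "k \<in> block_of i'" for k
    using that leader_eq_iff[OF _ i'] unfolding block_of_def by auto
  hence "{k\<in>{1..n}. leader i' < leader k} \<inter> block_of i' = {}" by fastforce
  hence "before i' + card (block_of i') = card ({k\<in>{1..n}. leader i' < leader k} \<union> block_of i')"
    unfolding before_def using finite_block_of by (simp add: card_Un_disjoint)
  also have "\<dots> \<le> before i"
    unfolding before_def using in_block lt by (intro card_mono) (auto simp: block_of_def)
  finally show ?thesis .
qed

lemma layout_less_of_leader_less:
  assumes "i \<in> {1..n}" "i' \<in> {1..n}" "leader i < leader i'"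
  shows "layout i' < layout i"
  using before_add_card_le[OF assms] rank_less[OF assms(2)] assms(1,2)
  unfolding layout_def by simp

lemma layout_range:
  assumes i: "i \<in> {1..n}"
  shows "1 \<le> layout i \<and> layout i \<le> n"
proof -
  have in_block: "leader k = leader i" if "k \<in> block_of i" for k
    using that leader_eq_iff[OF _ i] unfolding block_of_def by auto
  hence "{k\<in>{1..n}. leader i < leader k} \<inter> block_of i = {}" by fastforce
  hence "before i + card (block_of i) = card ({k\<in>{1..n}. leader i < leader k} \<union> block_of i)"
    unfolding before_def using finite_block_of by (simp add: card_Un_disjoint)
  also have "\<dots> \<le> card {1..n}" by (rule card_mono) (auto simp: block_of_def)
  finally show ?thesis using rank_less[OF i] i unfolding layout_def by simp
qed

lemma layout_less_iff:
  assumes i: "i \<in> {1..n}" and j: "j \<in> {1..n}" and gg: "g i = g j"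
  shows "layout i < layout j \<longleftrightarrow> v i < v j"
proof -
  have B: "block_of i = block_of j" using gg unfolding block_of_def by simp
  have "inj_on v (block_of j)" using inj_Sn[OF perm] by (simp add: inj_on_def inj_def)
  moreover have "i \<in> block_of j" "j \<in> block_of j" using i j gg unfolding block_of_def by auto
  ultimately have "rank i < rank j \<longleftrightarrow> v i < v j"
    unfolding rank_def B by (rule card_less_rank_less_iff[OF finite_block_of])
  moreover have "before i = before j" using leader_eq_iff[OF i j] gg unfolding before_def by simp
  ultimately show ?thesis using i j unfolding layout_def by simp
qed

lemma inj_on_layout: "inj_on layout {1..n}"
proof (rule inj_onI)
  fix i j assume i: "i \<in> {1..n}" and j: "j \<in> {1..n}" and e: "layout i = layout j"
  show "i = j"
  proof (cases "g i = g j")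
    case True
    hence "\<not> v i < v j" "\<not> v j < v i" using layout_less_iff[OF i j] layout_less_iff[OF j i] e by auto
    thus ?thesis using inj_Sn[OF perm] by (metis injD nat_neq_iff)
  next
    case False
    hence "leader i < leader j \<or> leader j < leader i" using leader_eq_iff[OF i j] by auto
    thus ?thesis using layout_less_of_leader_less[OF i j] layout_less_of_leader_less[OF j i] e by auto
  qed
qed

lemma layout_in_Sn: "layout \<in> Sn n"
proof (rule in_SnI[OF inj_on_layout])
  show "layout ` {1..n} \<subseteq> {1..n}" using layout_range by auto
qed (auto simp: layout_def)

lemma layout_leader: "i \<in> {1..n} \<Longrightarrow> layout (leader i) = before i + 1"
proof -
  assume i: "i \<in> {1..n}"
  have "{k\<in>block_of (leader i). v k < v (leader i)} = {}"
    using v_leader_le[OF i] block_of_leader[OF i] by fastforce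
  hence "rank (leader i) = 0" unfolding rank_def by (metis card.empty)
  moreover have "before (leader i) = before i" unfolding before_def using leader_leader[OF i] by simp
  ultimately show ?thesis using leader_mem[OF i] unfolding layout_def by simp
qed

lemma layout_leader_in_LRM:
  assumes i: "i \<in> {1..n}"
  shows "layout (leader i) \<in> LRM n layout"
proof -
  have li: "leader i \<in> {1..n}" using leader_mem[OF i] by simp
  have "layout k > layout (leader i)" if k: "1 \<le> k" "k < inv layout (layout (leader i))" for k
  proof -
    have kl: "k < leader i" using k Sn_inv_apply(1)[OF layout_in_Sn] by simp
    hence kn: "k \<in> {1..n}" using k li by simp
    have "leader k < leader (leader i)" using leader_le[OF kn] kl leader_leader[OF i] by simp
    thus ?thesis using layout_less_of_leader_less[OF kn li] by simp
  qed
  thus ?thesis using layout_range[OF li] unfolding LRM_def by auto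
qed

lemma LRM_layout_obtain:
  assumes l: "l \<in> LRM n layout"
  obtains i where "i \<in> {1..n}" "l = layout (leader i)"
proof -
  have ln: "l \<in> {1..n}" using l LRM_subset by blast
  define p where "p = inv layout l"
  have pn: "p \<in> {1..n}" unfolding p_def using Sn_in_range[OF inv_in_Sn[OF layout_in_Sn] ln] .
  have lp: "layout p = l" unfolding p_def using Sn_inv_apply(2)[OF layout_in_Sn] by simp
  have "leader p = p"
  proof (rule ccontr)
    assume "leader p \<noteq> p"
    hence "1 \<le> leader p \<and> leader p < inv layout l"
      using leader_le[OF pn] leader_mem[OF pn] p_def by simp
    hence "layout (leader p) > l" using l unfolding LRM_def by blast
    thus False using layout_leader[OF pn] lp pn unfolding layout_def by simp
  qed
  thus ?thesis using that pn lp by metis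
qed

lemma no_LRM_between_iff:
  assumes i: "i \<in> {1..n}" and j: "j \<in> {1..n}" and le: "layout i \<le> layout j"
  shows "\<not> (\<exists>l\<in>LRM n layout. layout i < l \<and> l \<le> layout j) \<longleftrightarrow> g i = g j"
proof
  assume none: "\<not> (\<exists>l\<in>LRM n layout. layout i < l \<and> l \<le> layout j)"
  show "g i = g j"
  proof (rule ccontr)
    assume "g i \<noteq> g j"
    hence "leader j < leader i"
      using leader_eq_iff[OF i j] layout_less_of_leader_less[OF i j] le by fastforce
    hence "layout i < layout (leader j)"
      using before_add_card_le[OF j i] layout_leader[OF j] rank_less[OF i] i unfolding layout_def by simp
    moreover have "layout (leader j) \<le> layout j" using layout_leader[OF j] j unfolding layout_def by simp
    ultimately show False using none layout_leader_in_LRM[OF j] by blast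
  qed
next
  assume gg: "g i = g j"
  show "\<not> (\<exists>l\<in>LRM n layout. layout i < l \<and> l \<le> layout j)"
  proof
    assume "\<exists>l\<in>LRM n layout. layout i < l \<and> l \<le> layout j"
    then obtain l where l: "l \<in> LRM n layout" "layout i < l" "l \<le> layout j" by blast
    obtain k where k: "k \<in> {1..n}" "l = layout (leader k)" by (rule LRM_layout_obtain[OF l(1)])
    have same: "before i = before j" "block_of i = block_of j"
      using leader_eq_iff[OF i j] gg unfolding before_def block_of_def by simp_all
    have lo: "before i < before k" using l(2) k(2) layout_leader[OF k(1)] i unfolding layout_def by simp
    have hi: "before k < before i + card (block_of i)"
      using l(3) k(2) layout_leader[OF k(1)] rank_less[OF j] j same unfolding layout_def by simp
    consider "leader k < leader i" | "leader i < leader k" | "leader i = leader k" by linarith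
    thus False
    proof cases
      case 1 thus False using before_add_card_le[OF k(1) i] hi by simp
    next
      case 2 thus False using before_add_card_le[OF i k(1)] lo by simp
    next
      case 3 thus False using lo unfolding before_def by simp
    qed
  qed
qed

lemma block_index_layout_eq_iff:
  assumes i: "i \<in> {1..n}" and j: "j \<in> {1..n}"
  shows "block_index (LRM' n layout) (layout i) = block_index (LRM' n layout) (layout j) \<longleftrightarrow> g i = g j"
proof (cases "layout i \<le> layout j")
  case True
  thus ?thesis using block_index_LRM'_eq_iff no_LRM_between_iff[OF i j] layout_range[OF i] by simp
next
  case False
  hence "layout j \<le> layout i" by simp
  thus ?thesis using block_index_LRM'_eq_iff no_LRM_between_iff[OF j i] layout_range[OF j] by (metis)
qed

lemma lrm_basis_layout: "lrm_basis n layout = block_class n g v"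
proof -
  have "lrm_basis n layout = block_class n g layout"
    unfolding lrm_basis_eq_block_class[OF layout_in_Sn]
    by (rule block_class_cong) (use block_index_layout_eq_iff in blast)
  also have "\<dots> = block_class n g v"
    by (rule block_class_eq) (use layout_less_iff in \<open>auto simp: block_equiv_def\<close>)
  finally show ?thesis .
qed

lemma num_blocks_le_card_LRM_layout: "num_blocks n g \<le> card (LRM n layout)"
proof -
  have "num_blocks n g = card ((\<lambda>i. layout (leader i)) ` {1..n})"
    unfolding num_blocks_def
  proof (rule card_image_eq_of_same_fibres)
    fix i j assume i: "i \<in> {1..n}" and j: "j \<in> {1..n}"
    have "layout (leader i) = layout (leader j) \<longleftrightarrow> leader i = leader j"
      using inj_on_layout leader_mem[OF i] leader_mem[OF j] by (auto dest: inj_onD)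
    thus "g i = g j \<longleftrightarrow> layout (leader i) = layout (leader j)" using leader_eq_iff[OF i j] by simp
  qed
  also have "\<dots> \<le> card (LRM n layout)"
    by (rule card_mono[OF finite_LRM]) (use layout_leader_in_LRM in blast)
  finally show ?thesis .
qed

end

text \<open>Splitting off the part \<open>Y\<close> of the block of a leader \<open>i0\<close> that \<open>v\<close> puts below \<open>i0\<close>
  (relabelled by a fresh label) removes at least the leader inversion \<open>(i0, Min Y)\<close>.\<close>

locale leader_split =
  fixes n :: nat and g v :: "nat \<Rightarrow> nat" and i0 j0 :: nat
  assumes perm: "v \<in> Sn n" and inversion: "(i0, j0) \<in> leader_inversions n g v"
begin

definition Y :: "nat set" where "Y = {k\<in>{1..n}. g k = g i0 \<and> v k < v i0}"
definition fresh :: nat where "fresh = Max (g ` {1..n}) + 1"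
definition g' :: "nat \<Rightarrow> nat" where "g' k = (if k \<in> Y then fresh else g k)"
definition lost :: "(nat \<Rightarrow> nat) set" where
  "lost = {x\<in>Sn n. block_equiv n g' v x \<and> \<not> block_equiv n g v x}"

lemma i0: "i0 \<in> {1..n}" and j0: "j0 \<in> Y" and i0_leader: "\<And>k. k \<in> {1..n} \<Longrightarrow> g k = g i0 \<Longrightarrow> i0 \<le> k"
  using inversion unfolding leader_inversions_def Y_def by auto

lemma i0_notin_Y: "i0 \<notin> Y"
  by (simp add: Y_def)

lemma g'_eq_fresh_iff: "k \<in> {1..n} \<Longrightarrow> g' k = fresh \<longleftrightarrow> k \<in> Y"
proof -
  assume "k \<in> {1..n}"
  hence "g k \<le> Max (g ` {1..n})" by (intro Max_ge) auto
  thus ?thesis unfolding g'_def fresh_def by simp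
qed

lemma g'_eq_iff:
  assumes "i \<in> {1..n}" "j \<in> {1..n}"
  shows "g' i = g' j \<longleftrightarrow> g i = g j \<and> (i \<in> Y \<longleftrightarrow> j \<in> Y)"
  using g'_eq_fresh_iff[OF assms(1)] g'_eq_fresh_iff[OF assms(2)] unfolding g'_def Y_def
  by (auto split: if_splits)

lemma num_blocks_g'_greater: "num_blocks n g < num_blocks n g'"
  unfolding num_blocks_def
proof (rule card_image_less_of_strict_refinement[of _ _ _ i0 j0])
  show "j0 \<in> {1..n}" "g i0 = g j0" using j0 by (auto simp: Y_def)
  show "g' i0 \<noteq> g' j0" using g'_eq_iff[OF i0 \<open>j0 \<in> {1..n}\<close>] i0_notin_Y j0 by blast
qed (use i0 g'_eq_iff in auto)

lemma finite_Y: "finite Y"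
  by (simp add: Y_def)

lemma Min_Y: "Min Y \<in> Y" "\<And>k. k \<in> Y \<Longrightarrow> Min Y \<le> k"
  using Min_in[OF finite_Y] Min_le[OF finite_Y] j0 by blast+

lemma leader_inversions_g'_cases:
  assumes p: "(i, j) \<in> leader_inversions n g' v"
  shows "i = Min Y \<and> j \<in> Y \<and> j \<noteq> i \<or> (i, j) \<in> leader_inversions n g v \<and> g i \<noteq> g i0"
proof -
  have ij: "i \<in> {1..n}" "j \<in> {1..n}" "g' j = g' i" "v j < v i"
    and lead: "\<And>k. k \<in> {1..n} \<Longrightarrow> g' k = g' i \<Longrightarrow> i \<le> k"
    using p unfolding leader_inversions_def by auto
  show ?thesis
  proof (cases "i \<in> Y")
    case True
    hence "j \<in> Y" using g'_eq_iff[OF ij(2,1)] ij(3) by blast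
    moreover have "i = Min Y"
      using lead[of "Min Y"] Min_Y True g'_eq_iff[OF _ ij(1)] unfolding Y_def by (simp add: le_antisym)
    ultimately show ?thesis using ij(4) by auto
  next
    case iY: False
    have "g i \<noteq> g i0"
    proof
      assume gi: "g i = g i0"
      hence "i = i0" using lead[OF i0] i0_leader[OF ij(1)] g'_eq_iff[OF i0 ij(1)] iY i0_notin_Y by fastforce
      moreover have "j \<notin> Y" using g'_eq_iff[OF ij(2,1)] ij(3) iY by blast
      ultimately show False using ij gi g'_eq_iff[OF ij(2,1)] unfolding Y_def by auto
    qed
    moreover have "k \<notin> Y" if "g k = g i" for k using that \<open>g i \<noteq> g i0\<close> unfolding Y_def by auto
    ultimately show ?thesis
      using ij lead g'_eq_iff unfolding leader_inversions_def by auto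
  qed
qed

lemma card_leader_inversions_g'_less:
  "card (leader_inversions n g' v) < card (leader_inversions n g v)"
proof -
  define \<phi> where "\<phi> p = (if fst p \<in> Y then i0 else fst p, snd p)" for p :: "nat \<times> nat"
  have i0_inv: "(i0, j) \<in> leader_inversions n g v" if "j \<in> Y" for j
    using that i0 i0_leader unfolding leader_inversions_def Y_def by auto
  have maps: "\<phi> ` leader_inversions n g' v \<subseteq> leader_inversions n g v - {(i0, Min Y)}"
  proof (rule image_subsetI)
    fix p assume "p \<in> leader_inversions n g' v"
    moreover obtain i j where ij: "p = (i, j)" by fastforce
    ultimately consider "i = Min Y" "j \<in> Y" "j \<noteq> i" | "(i, j) \<in> leader_inversions n g v" "g i \<noteq> g i0"
      using leader_inversions_g'_cases by blast
    thus "\<phi> p \<in> leader_inversions n g v - {(i0, Min Y)}"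
    proof cases
      case 1 thus ?thesis using Min_Y(1) i0_inv unfolding ij \<phi>_def by simp
    next
      case 2
      hence "i \<notin> Y" "i \<noteq> i0" unfolding Y_def by auto
      thus ?thesis using 2 unfolding ij \<phi>_def by simp
    qed
  qed
  have "inj_on \<phi> (leader_inversions n g' v)"
  proof (rule inj_onI)
    have key: "(i \<in> Y \<longrightarrow> i = Min Y) \<and> (i \<notin> Y \<longrightarrow> i \<noteq> i0)" if "(i, j) \<in> leader_inversions n g' v" for i j
      using leader_inversions_g'_cases[OF that] Min_Y(1) unfolding Y_def by auto
    fix p q assume p: "p \<in> leader_inversions n g' v" and q: "q \<in> leader_inversions n g' v" and e: "\<phi> p = \<phi> q"
    obtain i j i' j' where ij: "p = (i, j)" "q = (i', j')" by fastforce
    show "p = q" using key[of i j] key[of i' j'] p q e unfolding ij \<phi>_def by (auto split: if_splits)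
  qed
  hence "card (leader_inversions n g' v) = card (\<phi> ` leader_inversions n g' v)" by (simp add: card_image)
  also have "\<dots> \<le> card (leader_inversions n g v - {(i0, Min Y)})"
    by (rule card_mono[OF _ maps]) (simp add: finite_leader_inversions)
  also have "\<dots> < card (leader_inversions n g v)"
    by (rule card_Diff1_less[OF finite_leader_inversions i0_inv[OF Min_Y(1)]])
  finally show ?thesis .
qed

lemma g'_refines: "i \<in> {1..n} \<Longrightarrow> j \<in> {1..n} \<Longrightarrow> g' i = g' j \<Longrightarrow> g i = g j"
  using g'_eq_iff by blast

lemma block_class_g_eq: "block_class n g v x = block_class n g' v x - (if x \<in> lost then 1 else 0)"
  using block_equiv_refine[OF g'_refines] unfolding block_class_def lost_def by auto

lemma lost_subset: "lost \<subseteq> Sn n"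
  unfolding lost_def by blast

lemma lost_closed:
  assumes "x \<in> lost" "y \<in> Sn n" "block_equiv n g x y"
  shows "y \<in> lost"
proof -
  have "block_equiv n g' v y"
    using assms(1) block_equiv_trans block_equiv_refine[OF g'_refines assms(3)] unfolding lost_def by blast
  moreover have "\<not> block_equiv n g v y"
    using assms(1,3) block_equiv_sym block_equiv_trans unfolding lost_def by blast
  ultimately show ?thesis using assms(2) unfolding lost_def by blast
qed

lemma leader_inversions_lost_subset:
  assumes "x \<in> lost"
  shows "leader_inversions n g x \<subseteq> leader_inversions n g v"
proof
  fix p assume p: "p \<in> leader_inversions n g x"
  obtain i j where ij: "p = (i, j)" by fastforce
  have pd: "i\<in>{1..n}" "j\<in>{1..n}" "g j = g i" "x j < x i" "\<forall>k\<in>{1..n}. g k = g i \<longrightarrow> i \<le> k"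
    using p unfolding ij leader_inversions_def by auto
  have rx: "block_equiv n g' v x" using assms unfolding lost_def by blast
  have "v j < v i"
  proof (cases "g i = g i0")
    case False
    hence "g' j = g' i" using g'_eq_iff[OF pd(2,1)] pd(3) unfolding Y_def by auto
    thus ?thesis using rx pd(1,2,4) unfolding block_equiv_def by blast
  next
    case True
    hence i: "i = i0" using pd(5) i0 i0_leader[OF pd(1)] by (simp add: le_antisym)
    show ?thesis
    proof (cases "j \<in> Y")
      case True thus ?thesis using i unfolding Y_def by simp
    next
      case False
      hence "g' j = g' i0" using g'_eq_iff[OF pd(2) i0] i0_notin_Y pd(3) i by simp
      thus ?thesis using rx pd(2,4) i0 i unfolding block_equiv_def by blast
    qed
  qed
  thus "p \<in> leader_inversions n g v" using pd unfolding ij leader_inversions_def by auto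
qed

lemma lost_misses_Y:
  assumes "x \<in> lost"
  shows "\<exists>j\<in>Y. \<not> x j < x i0"
proof (rule ccontr)
  assume "\<not> (\<exists>j\<in>Y. \<not> x j < x i0)"
  hence below: "x j < x i0" if "j \<in> Y" for j using that by blast
  have x: "x \<in> Sn n" and rx: "block_equiv n g' v x" and nrx: "\<not> block_equiv n g v x"
    using assms unfolding lost_def by auto
  have "block_equiv n g v x"
  proof (rule block_equivI[OF perm x])
    fix a b assume a: "a\<in>{1..n}" and b: "b\<in>{1..n}" and gab: "g a = g b" and vab: "v a < v b"
    have via_g': "x a < x b" if "g' a = g' b" using rx a b that vab unfolding block_equiv_def by blast
    consider "a \<in> Y \<longleftrightarrow> b \<in> Y" | "a \<in> Y" "b \<notin> Y" | "a \<notin> Y" "b \<in> Y" by blast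
    thus "x a < x b"
    proof cases
      case 1 thus ?thesis using via_g' g'_eq_iff[OF a b] gab by blast
    next
      case 2
      have gb: "g b = g i0" using 2 gab unfolding Y_def by simp
      have "x i0 \<le> x b"
      proof (cases "b = i0")
        case False
        hence "v i0 \<noteq> v b" using inj_Sn[OF perm] by (auto dest: injD)
        moreover have "\<not> v b < v i0" using 2 b gb unfolding Y_def by simp
        moreover have "g' i0 = g' b" using g'_eq_iff[OF i0 b] gb 2 i0_notin_Y by simp
        hence "v i0 < v b \<longleftrightarrow> x i0 < x b" using rx i0 b unfolding block_equiv_def by blast
        ultimately show ?thesis by simp
      qed simp
      thus ?thesis using below 2 by (meson less_le_trans)
    next
      case 3
      thus ?thesis using vab gab a unfolding Y_def by auto
    qed
  qed
  thus False using nrx by simp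
qed

lemma card_leader_inversions_lost_less:
  assumes "x \<in> lost"
  shows "card (leader_inversions n g x) < card (leader_inversions n g v)"
proof (rule psubset_card_mono[OF finite_leader_inversions])
  obtain j where j: "j \<in> Y" "\<not> x j < x i0" using lost_misses_Y[OF assms] by blast
  hence "(i0, j) \<in> leader_inversions n g v" "(i0, j) \<notin> leader_inversions n g x"
    using i0 i0_leader unfolding leader_inversions_def Y_def by auto
  thus "leader_inversions n g x \<subset> leader_inversions n g v"
    using leader_inversions_lost_subset[OF assms] by blast
qed

end

text \<open>Induction on the number of leader inversions: without them the class is a single basis
  element (\<^locale>\<open>leader_layout\<close>); otherwise splitting a block (\<^locale>\<open>leader_split\<close>) writes
  the class as a class with more blocks minus classes with fewer leader inversions.\<close>

lemma block_class_in_lrm_span: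
  assumes "v \<in> Sn n"
  shows "in_lrm_span n (num_blocks n g) (block_class n g v :: (nat \<Rightarrow> nat) \<Rightarrow> 'k::comm_ring_1)"
  using assms
proof (induction "card (leader_inversions n g v)" arbitrary: g v rule: less_induct)
  case less
  show ?case
  proof (cases "leader_inversions n g v = {}")
    case True
    interpret leader_layout n g v using less.prems True by unfold_locales
    have "(block_class n g v :: (nat \<Rightarrow> nat) \<Rightarrow> 'k) = lrm_basis n layout" by (rule lrm_basis_layout[symmetric])
    thus ?thesis using in_lrm_span_lrm_basis[OF layout_in_Sn num_blocks_le_card_LRM_layout] by simp
  next
    case False
    then obtain i0 j0 where "(i0, j0) \<in> leader_inversions n g v" by auto
    then interpret leader_split n g v i0 j0 using less.prems by unfold_locales
    have "in_lrm_span n (num_blocks n g') (block_class n g' v :: (nat \<Rightarrow> nat) \<Rightarrow> 'k)"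
      by (rule less.hyps[OF card_leader_inversions_g'_less less.prems])
    hence "in_lrm_span n (num_blocks n g) (block_class n g' v :: (nat \<Rightarrow> nat) \<Rightarrow> 'k)"
      using num_blocks_g'_greater by (simp add: in_lrm_span_mono)
    moreover have "in_lrm_span n (num_blocks n g) (\<lambda>x. if x \<in> lost then (1::'k) else 0)"
    proof (rule in_lrm_span_indicator[OF lost_subset _ lost_closed])
      fix x assume "x \<in> lost"
      thus "in_lrm_span n (num_blocks n g) (block_class n g x :: (nat \<Rightarrow> nat) \<Rightarrow> 'k)"
        using less.hyps[OF card_leader_inversions_lost_less] lost_subset by blast
    qed
    ultimately show ?thesis
      unfolding block_class_g_eq[abs_def] by (rule in_lrm_span_diff)
  qed
qed

definition word :: "nat \<Rightarrow> (nat \<Rightarrow> nat) \<Rightarrow> nat list" where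
  "word n x = map x [1..<Suc n]"

lemma word_inj: "x \<in> Sn n \<Longrightarrow> w \<in> Sn n \<Longrightarrow> word n x = word n w \<Longrightarrow> x = w"
  by (rule Sn_eqI) (auto simp: word_def map_eq_conv)

lemma word_less:
  assumes p: "p \<in> {1..n}" and agree: "\<And>i. 1 \<le> i \<Longrightarrow> i < p \<Longrightarrow> x i = w i" and lt: "x p < w p"
  shows "word n x < word n w"
proof -
  have split: "[1..<Suc n] = [1..<p] @ p # [Suc p..<Suc n]"
    using p upt_add_eq_append[of 1 p "Suc n - p"] by (simp add: upt_conv_Cons)
  have "map x [1..<p] = map w [1..<p]" using agree by simp
  hence "word n x = map w [1..<p] @ x p # map x [Suc p..<Suc n]" unfolding word_def split by simp
  moreover have "word n w = map w [1..<p] @ w p # map w [Suc p..<Suc n]" unfolding word_def split by simp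
  moreover have "(xs @ a # ys :: nat list) < xs @ b # zs" if "a < b" for xs a b ys zs
    using that by (induction xs) auto
  ultimately show ?thesis using lt by simp
qed

lemma Sn_agree_below_ex_not_above:
  assumes x: "x \<in> Sn n" and w: "w \<in> Sn n" and p: "p \<in> {1..n}"
    and agree: "\<And>i. 1 \<le> i \<Longrightarrow> i < p \<Longrightarrow> x i = w i"
  shows "\<exists>i\<in>{p..n}. w p \<le> w i \<and> x i \<le> w p"
proof (rule ccontr)
  assume "\<not> (\<exists>i\<in>{p..n}. w p \<le> w i \<and> x i \<le> w p)"
  hence above: "w p < x i" if "i \<in> {p..n}" "w p \<le> w i" for i using that by (meson not_le)
  define H where "H = {i\<in>{p..n}. w p \<le> w i}"
  have tail: "{p..n} = {1..n} - {1..<p}" using p by auto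
  have "x ` {1..<p} = w ` {1..<p}" using agree by (intro image_cong) auto
  hence "x ` {p..n} = w ` {p..n}"
    unfolding tail image_set_diff[OF inj_Sn[OF x]] image_set_diff[OF inj_Sn[OF w]] Sn_image[OF x] Sn_image[OF w]
    by simp
  hence "x ` H \<subseteq> w ` (H - {p})"
    using above unfolding H_def by fastforce
  hence "card (x ` H) \<le> card (w ` (H - {p}))" by (rule card_mono[rotated]) (simp add: H_def)
  moreover have "card (x ` H) = card H" "card (w ` (H - {p})) = card (H - {p})"
    using inj_Sn[OF x] inj_Sn[OF w] by (simp_all add: card_image inj_on_subset[OF _ subset_UNIV])
  moreover have "card (H - {p}) < card H"
    using p by (intro card_Diff1_less) (auto simp: H_def)
  ultimately show False by linarith
qed

text \<open>If \<open>w i\<close> lies above \<open>w p\<close> but in a later block of \<open>LRM' n w\<close>, the left-to-right minimum \<open>l\<close>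
  opening the block of \<open>w i\<close> sits at a position \<open>q < p\<close>, where \<open>x\<close> agrees with \<open>w\<close>; hence
  \<open>w p < l = x q < x i\<close>.\<close>

lemma lrm_class_above:
  assumes w: "w \<in> Sn n" and x: "x \<in> Sn n"
    and r: "block_equiv n (\<lambda>i. block_index (LRM' n w) (w i)) w x"
    and p: "p \<in> {1..n}" and agree: "\<And>i. 1 \<le> i \<Longrightarrow> i < p \<Longrightarrow> x i = w i"
    and i: "i \<in> {p..n}" and wpi: "w p < w i"
  shows "w p < x i \<or> x p < x i"
proof -
  let ?b = "\<lambda>i. block_index (LRM' n w) (w i)"
  have inn: "i \<in> {1..n}" using i p by auto
  show ?thesis
  proof (cases "?b i = ?b p")
    case True
    thus ?thesis using r p inn wpi unfolding block_equiv_def by metis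
  next
    case False
    define S where "S = {l\<in>LRM n w. l \<le> w i}"
    have finS: "finite S" unfolding S_def using finite_LRM by simp
    have "\<exists>l\<in>LRM n w. w p < l \<and> l \<le> w i"
      using block_index_LRM'_eq_iff[of "w p" "w i" n w] Sn_in_range[OF w p] wpi False by auto
    then obtain l0 where l0: "l0 \<in> S" "w p < l0" unfolding S_def by blast
    define l where "l = Max S"
    have "l \<in> S" unfolding l_def using Max_in[OF finS] l0(1) by blast
    moreover have "l0 \<le> l" unfolding l_def by (rule Max_ge[OF finS l0(1)])
    ultimately have l: "l \<in> LRM n w" "l \<le> w i" "w p < l" using l0(2) unfolding S_def by auto
    define q where "q = inv w l"
    have qn: "q \<in> {1..n}" unfolding q_def using Sn_in_range[OF inv_in_Sn[OF w]] l(1) LRM_subset by blast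
    have wq: "w q = l" unfolding q_def using Sn_inv_apply(2)[OF w] by simp
    have "q < p"
    proof (rule ccontr)
      assume "\<not> q < p"
      hence "p < q" using wq l(3) by (cases "p = q") auto
      hence "w p > l" using l(1) p unfolding LRM_def q_def by auto
      thus False using l(3) by simp
    qed
    hence xq: "x q = l" using agree[of q] qn wq by simp
    have "\<not> (\<exists>l'\<in>LRM n w. l < l' \<and> l' \<le> w i)"
      using Max_ge[OF finS] unfolding l_def S_def by fastforce
    hence "?b q = ?b i" using block_index_LRM'_eq_iff[of l "w i" n w] l wq qn by (simp add: Sn_in_range[OF w])
    moreover have "w q < w i" using wq l(2) \<open>q < p\<close> i inj_Sn[OF w] by (metis injD le_neq_implies_less atLeastAtMost_iff not_le)
    ultimately have "x q < x i" using r qn inn unfolding block_equiv_def by metis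
    thus ?thesis using xq l(3) by simp
  qed
qed

lemma lrm_class_word_less:
  assumes w: "w \<in> Sn n" and x: "x \<in> Sn n"
    and r: "block_equiv n (\<lambda>i. block_index (LRM' n w) (w i)) w x" and ne: "x \<noteq> w"
  shows "word n x < word n w"
proof -
  define D where "D = {p\<in>{1..n}. x p \<noteq> w p}"
  have "D \<noteq> {}" using ne Sn_eqI[OF x w] unfolding D_def by blast
  define p where "p = Min D"
  have "p \<in> D" unfolding p_def using Min_in[of D] \<open>D \<noteq> {}\<close> by (simp add: D_def)
  hence p: "p \<in> {1..n}" and xp: "x p \<noteq> w p" unfolding D_def by auto
  have agree: "x i = w i" if "1 \<le> i" "i < p" for i
    using Min_le[of D i] that p unfolding p_def D_def by fastforce
  have "x p < w p"
  proof (rule ccontr)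
    assume "\<not> x p < w p"
    hence gt: "w p < x p" using xp by simp
    obtain i where i: "i \<in> {p..n}" "w p \<le> w i" "x i \<le> w p"
      using Sn_agree_below_ex_not_above[OF x w p agree] by blast
    show False
    proof (cases "i = p")
      case True thus False using i gt by simp
    next
      case False
      hence "w p < w i" using i inj_Sn[OF w] by (metis injD le_neq_implies_less)
      thus False using lrm_class_above[OF w x r p agree i(1)] i(3) gt by auto
    qed
  qed
  thus ?thesis using word_less[OF p agree] by simp
qed

lemma lrm_basis_support:
  assumes "w \<in> Sn n" "lrm_basis n w x \<noteq> 0"
  shows "x \<in> Sn n \<and> (x = w \<or> word n x < word n w)"
  using assms lrm_class_word_less[OF assms(1)]
  unfolding lrm_basis_eq_block_class[OF assms(1)] block_class_def by (auto split: if_splits)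

lemma finite_obtain_max_key:
  fixes key :: "'a \<Rightarrow> 'b::linorder"
  assumes "finite S" "S \<noteq> {}"
  obtains m where "m \<in> S" "\<And>s. s \<in> S \<Longrightarrow> key s \<le> key m"
proof -
  have "Max (key ` S) \<in> key ` S" using assms by (intro Max_in) auto
  then obtain m where "m \<in> S" "key m = Max (key ` S)" by (metis imageE)
  thus ?thesis using that assms(1) by simp
qed

lemma unitriangular_expansion:
  fixes b :: "'a \<Rightarrow> 'a \<Rightarrow> 'k::comm_ring_1" and key :: "'a \<Rightarrow> 'b::linorder"
  assumes U: "finite U" and key: "inj_on key U" and diag: "\<And>s. s \<in> U \<Longrightarrow> b s s = 1"
    and tri: "\<And>s t. s \<in> U \<Longrightarrow> b s t \<noteq> 0 \<Longrightarrow> t \<in> U \<and> (t = s \<or> key t < key s)"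
    and X: "\<And>t. t \<notin> U \<Longrightarrow> X t = 0"
  shows "\<exists>c. X = (\<lambda>t. \<Sum>s\<in>U. c s * b s t)"
  using X
proof (induction "card {t\<in>U. \<exists>s\<in>U. X s \<noteq> 0 \<and> key t \<le> key s}" arbitrary: X rule: less_induct)
  case less
  let ?D = "\<lambda>X. {t\<in>U. \<exists>s\<in>U. X s \<noteq> 0 \<and> key t \<le> key s}"
  define S where "S = {s\<in>U. X s \<noteq> 0}"
  show ?case
  proof (cases "S = {}")
    case True
    hence "X = (\<lambda>t. \<Sum>s\<in>U. 0 * b s t)" using less.prems unfolding S_def by fastforce
    thus ?thesis by (intro exI[of _ "\<lambda>_. 0"])
  next
    case False
    obtain m where m: "m \<in> S" "\<And>s. s \<in> S \<Longrightarrow> key s \<le> key m"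
      using finite_obtain_max_key[of S key] U False unfolding S_def by auto
    have mU: "m \<in> U" and Xm: "X m \<noteq> 0" using m(1) unfolding S_def by auto
    define X' where "X' t = X t - X m * b m t" for t
    have X'_out: "X' t = 0" if "t \<notin> U" for t
    proof -
      have "b m t = 0" using tri[OF mU, of t] that by blast
      thus ?thesis using less.prems[OF that] unfolding X'_def by simp
    qed
    have X'_below: "key t < key m" if t: "t \<in> U" "X' t \<noteq> 0" for t
    proof -
      have "t \<noteq> m" using t(2) diag[OF mU] unfolding X'_def by auto
      show ?thesis
      proof (cases "X t = 0")
        case True
        hence "b m t \<noteq> 0" using t(2) unfolding X'_def by auto
        thus ?thesis using tri[OF mU] \<open>t \<noteq> m\<close> by blast
      next
        case False
        hence "key t \<le> key m" using m(2) t(1) unfolding S_def by blast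
        moreover have "key t \<noteq> key m" using key t(1) mU \<open>t \<noteq> m\<close> by (meson inj_onD)
        ultimately show ?thesis by simp
      qed
    qed
    have sub: "?D X' \<subseteq> ?D X - {m}"
      using X'_below Xm mU by fastforce
    have fin: "finite (?D X)" using U by simp
    have "card (?D X') \<le> card (?D X - {m})" by (rule card_mono[OF _ sub]) (use fin in simp)
    also have "\<dots> < card (?D X)" by (rule card_Diff1_less[OF fin]) (use mU Xm in blast)
    finally have "card (?D X') < card (?D X)" .
    then obtain c where c: "X' = (\<lambda>t. \<Sum>s\<in>U. c s * b s t)" using less.hyps X'_out by blast
    have "X = (\<lambda>t. \<Sum>s\<in>U. (c s + (if s = m then X m else 0)) * b s t)"
    proof
      fix t
      have "(\<Sum>s\<in>U. (c s + (if s = m then X m else 0)) * b s t)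
          = X' t + (\<Sum>s\<in>U. (if s = m then X m else 0) * b s t)"
        unfolding c by (simp add: distrib_right sum.distrib)
      also have "\<dots> = X t" using sum_delta_mult[OF U mU, of "X m" "\<lambda>s. b s t"] unfolding X'_def by simp
      finally show "X t = (\<Sum>s\<in>U. (c s + (if s = m then X m else 0)) * b s t)" ..
    qed
    thus ?thesis by (intro exI[of _ "\<lambda>s. c s + (if s = m then X m else 0)"])
  qed
qed

lemma unitriangular_expansion_unique:
  fixes b :: "'a \<Rightarrow> 'a \<Rightarrow> 'k::comm_ring_1" and key :: "'a \<Rightarrow> 'b::linorder"
  assumes U: "finite U" and key: "inj_on key U" and diag: "\<And>s. s \<in> U \<Longrightarrow> b s s = 1"
    and tri: "\<And>s t. s \<in> U \<Longrightarrow> b s t \<noteq> 0 \<Longrightarrow> t \<in> U \<and> (t = s \<or> key t < key s)"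
    and zero: "\<And>t. (\<Sum>s\<in>U. c s * b s t) = 0"
  shows "\<forall>s\<in>U. c s = 0"
proof (rule ccontr)
  assume "\<not> (\<forall>s\<in>U. c s = 0)"
  hence "{s\<in>U. c s \<noteq> 0} \<noteq> {}" by blast
  then obtain m where m: "m \<in> {s\<in>U. c s \<noteq> 0}" and max: "\<And>s. s \<in> {s\<in>U. c s \<noteq> 0} \<Longrightarrow> key s \<le> key m"
    using finite_obtain_max_key[of "{s\<in>U. c s \<noteq> 0}" key] U by auto
  have "c s * b s m = (if s = m then c m else 0)" if s: "s \<in> U" for s
  proof (cases "s = m \<or> c s = 0")
    case True thus ?thesis using diag s by auto
  next
    case False
    hence "key s < key m \<or> key s = key m" using max s by fastforce
    hence "\<not> key m < key s" by auto
    hence "b s m = 0" using tri[OF s, of m] False by auto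
    thus ?thesis using False by simp
  qed
  hence "(\<Sum>s\<in>U. c s * b s m) = c m" using m U by (simp add: sum.delta cong: sum.cong)
  thus False using zero[of m] m by simp
qed

lemma lrm_basis_unique_expansion:
  fixes x :: "(nat \<Rightarrow> nat) \<Rightarrow> 'k::comm_ring_1"
  assumes x: "\<forall>u. u \<notin> Sn n \<longrightarrow> x u = 0"
  shows "\<exists>!c. (\<forall>u. u \<notin> Sn n \<longrightarrow> c u = 0) \<and> x = (\<lambda>v. \<Sum>w\<in>Sn n. c w * lrm_basis n w v)"
proof -
  have key: "inj_on (word n) (Sn n)" using word_inj by (auto intro: inj_onI)
  have diag: "\<And>s. s \<in> Sn n \<Longrightarrow> lrm_basis n s s = (1::'k)" by (rule lrm_basis_diag)
  have supp: "\<And>s t. s \<in> Sn n \<Longrightarrow> lrm_basis n s t \<noteq> (0::'k) \<Longrightarrow> t \<in> Sn n \<and> (t = s \<or> word n t < word n s)"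
    by (rule lrm_basis_support)
  note tri = finite_Sn key diag supp
  obtain c where c: "x = (\<lambda>v. \<Sum>w\<in>Sn n. c w * lrm_basis n w v)"
    using unitriangular_expansion[of "Sn n" "word n" "lrm_basis n", OF tri] x by blast
  let ?c = "\<lambda>u. if u \<in> Sn n then c u else 0"
  show ?thesis
  proof (rule ex1I[of _ ?c])
    show "(\<forall>u. u \<notin> Sn n \<longrightarrow> ?c u = 0) \<and> x = (\<lambda>v. \<Sum>w\<in>Sn n. ?c w * lrm_basis n w v)"
      unfolding c by simp
  next
    fix d assume d: "(\<forall>u. u \<notin> Sn n \<longrightarrow> d u = 0) \<and> x = (\<lambda>v. \<Sum>w\<in>Sn n. d w * lrm_basis n w v)"
    have zero: "(\<Sum>w\<in>Sn n. (d w - c w) * lrm_basis n w v) = 0" for v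
      using fun_cong[OF c, of v] fun_cong[OF conjunct2[OF d], of v]
      by (simp add: left_diff_distrib sum_subtractf)
    have "\<forall>w\<in>Sn n. d w - c w = 0"
      by (rule unitriangular_expansion_unique[of "Sn n" "word n" "lrm_basis n" "\<lambda>w. d w - c w", OF tri zero])
    thus "d = ?c" using d by auto
  qed
qed

lemma B_comp_mult_lrm_basis:
  assumes w: "w \<in> Sn n" and a: "\<alpha> \<in> Comp n"
  shows "\<exists>R. in_lrm_span n (card (LRM n w) + 1) R \<and>
    gmult n (B_comp n \<alpha>) (lrm_basis n w) = (\<lambda>x. of_nat (eta (cLRM' n w) \<alpha>) * lrm_basis n w x + R x)"
proof -
  interpret composition_labelling n "cLRM' n w" w using cLRM'(1) w by unfold_locales
  let ?g = "\<lambda>i. block_index (LRM' n w) (w i)"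
  let ?R = "\<lambda>x. \<Sum>z\<in>block_labellings n \<alpha> ?g w - block_constant_labellings n \<alpha> ?g w.
              block_class n (refine_labels ?g z) w x"
  have "in_lrm_span n (card (LRM n w) + 1) ?R"
  proof (rule in_lrm_span_sum)
    fix z assume "z \<in> block_labellings n \<alpha> ?g w - block_constant_labellings n \<alpha> ?g w"
    hence "card (LRM n w) + 1 \<le> num_blocks n (refine_labels ?g z)"
      using num_blocks_refine_labels_less num_blocks_LRM'[OF w] by fastforce
    thus "in_lrm_span n (card (LRM n w) + 1) (block_class n (refine_labels ?g z) w)"
      using block_class_in_lrm_span[OF w] in_lrm_span_mono by blast
  qed
  moreover have "card (block_constant_labellings n \<alpha> ?g w) = eta (cLRM' n w) \<alpha>"
    using card_block_constant_labellings[OF a] unfolding cLRM'(2) .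
  ultimately show ?thesis
    unfolding lrm_basis_eq_block_class[OF w] B_comp_mult_block_class_split[OF a] by auto
qed

lemma lrm_triangular_coefficients:
  assumes w: "w \<in> Sn n" and R: "in_lrm_span n (card (LRM n w) + 1) R"
  shows "\<exists>c. (\<lambda>x. e * lrm_basis n w x + R x) = (\<lambda>v. \<Sum>u\<in>Sn n. c u * lrm_basis n u v)
           \<and> (\<forall>u\<in>Sn n. c u \<noteq> 0 \<longrightarrow> u = w \<or> card (LRM n w) < card (LRM n u)) \<and> c w = e"
proof -
  obtain d where d: "R = (\<lambda>v. \<Sum>u\<in>Sn n. d u * lrm_basis n u v)"
    and high: "\<forall>u\<in>Sn n. d u \<noteq> 0 \<longrightarrow> card (LRM n w) + 1 \<le> card (LRM n u)"
    using R unfolding in_lrm_span_def by blast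
  let ?c = "\<lambda>u. d u + (if u = w then e else 0)"
  have "(\<lambda>x. e * lrm_basis n w x + R x) = (\<lambda>v. \<Sum>u\<in>Sn n. ?c u * lrm_basis n u v)"
  proof
    fix v show "e * lrm_basis n w v + R v = (\<Sum>u\<in>Sn n. ?c u * lrm_basis n u v)"
      using sum_delta_mult[OF finite_Sn w, of e "\<lambda>u. lrm_basis n u v"]
      by (simp add: d distrib_right sum.distrib)
  qed
  moreover have "d w = 0" using high w by fastforce
  ultimately show ?thesis using high by (intro exI[of _ ?c]) fastforce
qed

lemma mult_lrm_basis_triangular:
  fixes lam :: "nat list \<Rightarrow> 'k::comm_ring_1"
  assumes w: "w \<in> Sn n"
  shows "\<exists>c. gmult n (\<lambda>u. \<Sum>\<alpha>\<in>Comp n. lam \<alpha> * B_comp n \<alpha> u) (lrm_basis n w)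
              = (\<lambda>v. \<Sum>u\<in>Sn n. c u * lrm_basis n u v)
           \<and> (\<forall>u\<in>Sn n. c u \<noteq> 0 \<longrightarrow> u = w \<or> card (LRM n w) < card (LRM n u))
           \<and> c w = (\<Sum>\<alpha>\<in>Comp n. lam \<alpha> * of_nat (eta (cLRM' n w) \<alpha>))"
proof -
  have "\<forall>\<alpha>\<in>Comp n. \<exists>R :: (nat \<Rightarrow> nat) \<Rightarrow> 'k. in_lrm_span n (card (LRM n w) + 1) R \<and>
    gmult n (B_comp n \<alpha>) (lrm_basis n w) = (\<lambda>x. of_nat (eta (cLRM' n w) \<alpha>) * lrm_basis n w x + R x)"
    using B_comp_mult_lrm_basis[OF w] by blast
  from bchoice[OF this] obtain R :: "nat list \<Rightarrow> (nat \<Rightarrow> nat) \<Rightarrow> 'k" where R: "\<forall>\<alpha>\<in>Comp n. in_lrm_span n (card (LRM n w) + 1) (R \<alpha>) \<and>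
    gmult n (B_comp n \<alpha>) (lrm_basis n w) = (\<lambda>x. of_nat (eta (cLRM' n w) \<alpha>) * lrm_basis n w x + R \<alpha> x)"
    by blast
  have "gmult n (\<lambda>u. \<Sum>\<alpha>\<in>Comp n. lam \<alpha> * B_comp n \<alpha> u) (lrm_basis n w)
      = (\<lambda>x. (\<Sum>\<alpha>\<in>Comp n. lam \<alpha> * of_nat (eta (cLRM' n w) \<alpha>)) * lrm_basis n w x
             + (\<Sum>\<alpha>\<in>Comp n. lam \<alpha> * R \<alpha> x))"
    unfolding gmult_sum_left using R
    by (simp add: distrib_left sum.distrib sum_distrib_right mult.assoc cong: sum.cong)
  moreover have "in_lrm_span n (card (LRM n w) + 1) (\<lambda>x. \<Sum>\<alpha>\<in>Comp n. lam \<alpha> * R \<alpha> x)"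
    by (rule in_lrm_span_sum) (use R in \<open>blast intro: in_lrm_span_scale\<close>)
  ultimately show ?thesis using lrm_triangular_coefficients[OF w] by simp
qed

definition lrm_order :: "nat \<Rightarrow> ((nat \<Rightarrow> nat) \<times> (nat \<Rightarrow> nat)) set" where
  "lrm_order n = {(u, w). u \<in> Sn n \<and> w \<in> Sn n \<and>
     (card (LRM n w) < card (LRM n u) \<or> card (LRM n u) = card (LRM n w) \<and> word n u \<le> word n w)}"

lemma linear_order_on_lrm_order: "linear_order_on (Sn n) (lrm_order n)"
  unfolding linear_order_on_def partial_order_on_def preorder_on_def
  by (auto simp: lrm_order_def refl_on_def trans_def antisym_def total_on_def dest: word_inj)

theorem corollary3p9:
  fixes n :: nat and lam :: "nat list \<Rightarrow> 'k::comm_ring_1" and a :: "(nat \<Rightarrow> nat) \<Rightarrow> 'k"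
  defines "a \<equiv> (\<lambda>u. \<Sum>\<alpha>\<in>Comp n. lam \<alpha> * B_comp n \<alpha> u)"
  shows "(\<forall>x :: (nat \<Rightarrow> nat) \<Rightarrow> 'k. (\<forall>u. u \<notin> Sn n \<longrightarrow> x u = 0) \<longrightarrow>
            (\<exists>!c. (\<forall>u. u \<notin> Sn n \<longrightarrow> c u = 0) \<and>
                  x = (\<lambda>v. \<Sum>w\<in>Sn n. c w * lrm_basis n w v)))
       \<and> (\<exists>r. linear_order_on (Sn n) r \<and>
            (\<forall>w\<in>Sn n. \<exists>c :: (nat \<Rightarrow> nat) \<Rightarrow> 'k.
                gmult n a (lrm_basis n w) = (\<lambda>v. \<Sum>u\<in>Sn n. c u * lrm_basis n u v)
              \<and> (\<forall>u\<in>Sn n. c u \<noteq> 0 \<longrightarrow> (u, w) \<in> r)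
              \<and> c w = (\<Sum>\<alpha>\<in>Comp n. lam \<alpha> * of_nat (eta (cLRM' n w) \<alpha>))))"
proof (intro conjI allI impI exI[of _ "lrm_order n"] ballI)
  show "\<exists>!c. (\<forall>u. u \<notin> Sn n \<longrightarrow> c u = 0) \<and> x = (\<lambda>v. \<Sum>w\<in>Sn n. c w * lrm_basis n w v)"
    if "\<forall>u. u \<notin> Sn n \<longrightarrow> x u = 0" for x :: "(nat \<Rightarrow> nat) \<Rightarrow> 'k"
    using lrm_basis_unique_expansion[OF that] .
  show "linear_order_on (Sn n) (lrm_order n)" by (rule linear_order_on_lrm_order)
  fix w assume w: "w \<in> Sn n"
  then obtain c :: "(nat \<Rightarrow> nat) \<Rightarrow> 'k" where c:
    "gmult n a (lrm_basis n w) = (\<lambda>v. \<Sum>u\<in>Sn n. c u * lrm_basis n u v)"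
    "\<forall>u\<in>Sn n. c u \<noteq> 0 \<longrightarrow> u = w \<or> card (LRM n w) < card (LRM n u)"
    "c w = (\<Sum>\<alpha>\<in>Comp n. lam \<alpha> * of_nat (eta (cLRM' n w) \<alpha>))"
    using mult_lrm_basis_triangular[OF w, of lam] unfolding a_def by blast
  have "(u, w) \<in> lrm_order n" if "u \<in> Sn n" "c u \<noteq> 0" for u
    using c(2) that w unfolding lrm_order_def by auto
  thus "\<exists>c. gmult n a (lrm_basis n w) = (\<lambda>v. \<Sum>u\<in>Sn n. c u * lrm_basis n u v)
          \<and> (\<forall>u\<in>Sn n. c u \<noteq> 0 \<longrightarrow> (u, w) \<in> lrm_order n)
          \<and> c w = (\<Sum>\<alpha>\<in>Comp n. lam \<alpha> * of_nat (eta (cLRM' n w) \<alpha>))"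
    using c(1,3) by blast
qed

end
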